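(* Let $n\ge1$, $s\in(0,1)$, $p\in[1,\infty)$. Let $F:\mathbb{R}\times(\mathbb{R}^n\setminus\{0\})\to[0,\infty)$ satisfy: $F(t,x)=F(-t,x)=F(-t,-x)$; $F(t_1,x)\le F(t_2,x)$ whenever $|t_1|\le|t_2|$; and, for some $c_*,c^*>0$, $c_*\big(\frac{|t|^p}{|x|^{n+sp}}-\frac{1}{|x|^{n+sp-p}}\big)\le F(t,x)\le c^*\frac{|t|^p}{|x|^{n+sp}}$. Let $W:\mathbb{R}\to[0,\infty)$ with $W\in C^2([-1,1])$ and $W(\pm1)=0$. Let $u:\mathbb{R}^n\to\mathbb{R}$ with $|u|\le1$ be a minimizer of $\mathcal{E}(\cdot,B_{R+2})$ for every sufficiently large $R$. Then $\lim_{R\to\infty}R^{-n}\mathcal{E}(u,B_R)=0$; more precisely, for all large $R$, $$\mathcal{E}(u,B_R)\le\begin{cases}CR^{n-1}&\text{if } s\in(\frac1p,1),\\ CR^{n-1}\log R&\text{if } s=\frac1p,\\ CR^{n-sp}&\text{if } s\in(0,\frac1p),\end{cases}$$ where $C>0$ is a constant independent of $R$.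
   Context: $B_R$ is the open ball of radius $R$ centered at $0$ and $\mathcal{C}B_R=\mathbb{R}^n\setminus B_R$. $\mathcal{E}(u,B_R)=\iint_{\mathbb{R}^{2n}\setminus(\mathcal{C}B_R)^2}F(u(x)-u(y),x-y)\,dx\,dy+\int_{B_R}W(u)\,dx$. A measurable $u$ is a minimizer of $\mathcal{E}(\cdot,B_R)$ if $\mathcal{E}(u,B_R)<\infty$ and $\mathcal{E}(u,B_R)\le\mathcal{E}(v,B_R)$ for every measurable $v$ with $v=u$ a.e. in $\mathcal{C}B_R$. *)

theory Defs
  imports "HOL-Analysis.Analysis"
begin

text \<open>The energy E(u, B_R): nonlocal interaction over R^{2n} minus (C B_R)^2
  plus potential over B_R; both integrands are nonnegative, so we use
  nonnegative (ennreal-valued) Lebesgue integrals.\<close>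
definition energy ::
  "(real \<Rightarrow> real^'n \<Rightarrow> real) \<Rightarrow> (real \<Rightarrow> real) \<Rightarrow> (real^'n \<Rightarrow> real) \<Rightarrow> real \<Rightarrow> ennreal" where
  "energy F W u R =
     (\<integral>\<^sup>+ z. indicator (- ((- ball 0 R) \<times> (- ball 0 R))) z
                * ennreal (F (u (fst z) - u (snd z)) (fst z - snd z))
       \<partial>(lebesgue \<Otimes>\<^sub>M lebesgue))
   + (\<integral>\<^sup>+ x. indicator (ball 0 R) x * ennreal (W (u x)) \<partial>lebesgue)"

definition is_minimizer ::
  "(real \<Rightarrow> real^'n \<Rightarrow> real) \<Rightarrow> (real \<Rightarrow> real) \<Rightarrow> (real^'n \<Rightarrow> real) \<Rightarrow> real \<Rightarrow> bool" where
  "is_minimizer F W u R \<longleftrightarrow>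
     u \<in> borel_measurable lebesgue \<and> energy F W u R < \<infinity> \<and>
     (\<forall>v \<in> borel_measurable lebesgue.
        (AE x in lebesgue. x \<notin> ball 0 R \<longrightarrow> v x = u x) \<longrightarrow> energy F W u R \<le> energy F W v R)"

definition C2_on :: "real set \<Rightarrow> (real \<Rightarrow> real) \<Rightarrow> bool" where
  "C2_on S W \<longleftrightarrow> (\<exists>W1 W2.
     (\<forall>t\<in>S. (W has_real_derivative W1 t) (at t within S)) \<and>
     (\<forall>t\<in>S. (W1 has_real_derivative W2 t) (at t within S)) \<and>
     continuous_on S W2)"

end

(*
  Let ramp_R be -1 on the ball B_(R+1), 1 outside B_(R+2) and linear in |x| in between.
  Since |u| <= 1, v = min u ramp_R equals u outside B_(R+2) and -1 on B_(R+1), so it is an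
  admissible competitor.  As F is monotone in |t|, each interaction or potential term of v is
  bounded by that of ramp_R plus, for terms not involving B_(R+1), that of u.  Those u-terms
  occur on both sides of E(u) <= E(v) and cancel because E(u) is finite, which leaves
  E(u, B_R) <= E(u, B_(R+1)) <= E(ramp_R, B_(R+2)).

  The latter is estimated from the upper bound on F.  Pairs with a point in the annulus
  B_(R+2) - B_(R+1) contribute at most its volume, O(R^(n-1)), times the finite integral of
  min(1,|z|)^p / |z|^(n+sp); so does the potential.  Pairs with x in B_(R+1) and y outside
  B_(R+2) contribute a multiple of (R+2-|x|)^(-sp); integrating over unit layers gives
  O(R^(n-1) * sum_(j <= R+1) j^(-sp)), which is O(R^(n-1)), O(R^(n-1) log R) or O(R^(n-sp))
  according as sp > 1, sp = 1 or sp < 1.  Each of these is o(R^n).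
*)

theory Submission
  imports Defs
begin

lemma sigma_finite_measure_lebesgue: "sigma_finite_measure (lebesgue :: 'a::euclidean_space measure)"
proof
  obtain A :: "'a set set" where "countable A" "A \<subseteq> sets lborel" "\<Union>A = space lborel"
    "\<forall>a\<in>A. emeasure lborel a \<noteq> \<infinity>"
    using lborel.sigma_finite_countable by blast
  then show "\<exists>A::'a set set. countable A \<and> A \<subseteq> sets lebesgue \<and> \<Union>A = space lebesgue \<and>
      (\<forall>a\<in>A. emeasure lebesgue a \<noteq> \<infinity>)"
    by (intro exI[of _ A]) auto
qed

interpretation lebesgue: sigma_finite_measure "lebesgue :: 'a::euclidean_space measure"
  by (rule sigma_finite_measure_lebesgue)

interpretation lebesgue_pair: pair_sigma_finite "lebesgue :: 'a::euclidean_space measure"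
  "lebesgue :: 'b::euclidean_space measure" ..

lemma borel_measurable_lebesgueI:
  fixes h :: "'a::euclidean_space \<Rightarrow> 'c::topological_space"
  shows "h \<in> borel_measurable borel \<Longrightarrow> h \<in> borel_measurable lebesgue"
  by (rule measurable_completion) simp

lemma borel_measurable_lebesgue_pairI:
  fixes h :: "'a::euclidean_space \<times> 'b::euclidean_space \<Rightarrow> 'c::topological_space"
  assumes "h \<in> borel_measurable borel"
  shows "h \<in> borel_measurable (lebesgue \<Otimes>\<^sub>M lebesgue)"
proof -
  have "(\<lambda>x. x) \<in> (lebesgue::'a measure) \<rightarrow>\<^sub>M borel" "(\<lambda>x. x) \<in> (lebesgue::'b measure) \<rightarrow>\<^sub>M borel"
    by (rule measurable_completion, simp)+
  then have "(\<lambda>z. (fst z, snd z)) \<in> (lebesgue \<Otimes>\<^sub>M lebesgue) \<rightarrow>\<^sub>M (borel \<Otimes>\<^sub>M borel :: ('a \<times> 'b) measure)"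
    by (intro measurable_Pair) (auto intro: measurable_compose[OF measurable_fst] measurable_compose[OF measurable_snd])
  then show ?thesis
    using assms by (auto simp: borel_prod intro: measurable_compose)
qed

lemma nn_integral_lborel_diff_left:
  fixes f :: "'a::euclidean_space \<Rightarrow> ennreal"
  assumes "f \<in> borel_measurable borel"
  shows "(\<integral>\<^sup>+y. f (x - y) \<partial>lborel) = (\<integral>\<^sup>+z. f z \<partial>lborel)"
proof -
  have "(lborel::'a measure) = distr lborel borel (\<lambda>y. x - y)"
    using lborel_affine[of "-1::real" x] by (simp add: density_1)
  moreover have "(\<integral>\<^sup>+z. f z \<partial>distr lborel borel (\<lambda>y. x - y)) = (\<integral>\<^sup>+y. f (x - y) \<partial>lborel)"
    using assms by (subst nn_integral_distr) auto
  ultimately show ?thesis by simp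
qed

lemma nn_integral_lborel_diff_right:
  fixes f :: "'a::euclidean_space \<Rightarrow> ennreal"
  assumes "f \<in> borel_measurable borel"
  shows "(\<integral>\<^sup>+x. f (x - y) \<partial>lborel) = (\<integral>\<^sup>+z. f z \<partial>lborel)"
proof -
  have "(lborel::'a measure) = distr lborel borel ((+) (-y))"
    using lborel_distr_plus[of "-y"] by simp
  moreover have "(\<integral>\<^sup>+z. f z \<partial>distr lborel borel ((+) (-y))) = (\<integral>\<^sup>+x. f (x - y) \<partial>lborel)"
    using assms by (subst nn_integral_distr) (auto simp: add.commute)
  ultimately show ?thesis by simp
qed

lemma borel_measurable_Pair_slice:
  fixes h :: "'a::euclidean_space \<Rightarrow> 'b::euclidean_space \<Rightarrow> ennreal"
  assumes "(\<lambda>z. h (fst z) (snd z)) \<in> borel_measurable borel"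
  shows "h x \<in> borel_measurable borel"
proof -
  have "(\<lambda>z. h (fst z) (snd z)) \<in> borel_measurable (borel \<Otimes>\<^sub>M borel)"
    using assms by (simp add: borel_prod)
  from measurable_Pair2[OF this, of x] show ?thesis by simp
qed

lemma borel_measurable_diff_coordinates:
  fixes h :: "'a::euclidean_space \<Rightarrow> 'a \<Rightarrow> ennreal"
  assumes "(\<lambda>z. h (fst z) (snd z)) \<in> borel_measurable borel"
  shows "(\<lambda>z. h (fst z) (fst z - snd z)) \<in> borel_measurable (lebesgue \<Otimes>\<^sub>M lebesgue)"
    and "(\<lambda>z. h (snd z) (fst z - snd z)) \<in> borel_measurable (lebesgue \<Otimes>\<^sub>M lebesgue)"
proof -
  have "(\<lambda>z::'a \<times> 'a. (fst z, fst z - snd z)) \<in> borel_measurable borel"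
    "(\<lambda>z::'a \<times> 'a. (snd z, fst z - snd z)) \<in> borel_measurable borel"
    by (intro borel_measurable_continuous_onI continuous_intros)+
  from this[THEN measurable_compose, OF assms] show
    "(\<lambda>z. h (fst z) (fst z - snd z)) \<in> borel_measurable (lebesgue \<Otimes>\<^sub>M lebesgue)"
    "(\<lambda>z. h (snd z) (fst z - snd z)) \<in> borel_measurable (lebesgue \<Otimes>\<^sub>M lebesgue)"
    by (auto intro: borel_measurable_lebesgue_pairI)
qed

lemma nn_integral_pair_diff_fst:
  fixes h :: "'a::euclidean_space \<Rightarrow> 'a \<Rightarrow> ennreal"
  assumes h: "(\<lambda>z. h (fst z) (snd z)) \<in> borel_measurable borel"
  shows "(\<integral>\<^sup>+z. h (fst z) (fst z - snd z) \<partial>(lebesgue \<Otimes>\<^sub>M lebesgue))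
    = (\<integral>\<^sup>+x. \<integral>\<^sup>+w. h x w \<partial>lborel \<partial>lborel)"
proof -
  have "(\<integral>\<^sup>+z. h (fst z) (fst z - snd z) \<partial>(lebesgue \<Otimes>\<^sub>M lebesgue))
      = (\<integral>\<^sup>+x. \<integral>\<^sup>+y. h x (x - y) \<partial>lebesgue \<partial>lebesgue)"
    using lebesgue.nn_integral_fst[OF borel_measurable_diff_coordinates(1)[OF h]] by simp
  also have "\<dots> = (\<integral>\<^sup>+x. \<integral>\<^sup>+w. h x w \<partial>lborel \<partial>lborel)"
    using nn_integral_lborel_diff_left[OF borel_measurable_Pair_slice[OF h]]
    by (simp add: nn_integral_completion)
  finally show ?thesis .
qed

lemma nn_integral_pair_diff_snd:
  fixes h :: "'a::euclidean_space \<Rightarrow> 'a \<Rightarrow> ennreal"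
  assumes h: "(\<lambda>z. h (fst z) (snd z)) \<in> borel_measurable borel"
  shows "(\<integral>\<^sup>+z. h (snd z) (fst z - snd z) \<partial>(lebesgue \<Otimes>\<^sub>M lebesgue))
    = (\<integral>\<^sup>+y. \<integral>\<^sup>+w. h y w \<partial>lborel \<partial>lborel)"
proof -
  have "(\<integral>\<^sup>+z. h (snd z) (fst z - snd z) \<partial>(lebesgue \<Otimes>\<^sub>M lebesgue))
      = (\<integral>\<^sup>+y. \<integral>\<^sup>+x. h y (x - y) \<partial>lebesgue \<partial>lebesgue)"
    using lebesgue_pair.nn_integral_snd[OF borel_measurable_diff_coordinates(2)[OF h]] by simp
  also have "\<dots> = (\<integral>\<^sup>+y. \<integral>\<^sup>+w. h y w \<partial>lborel \<partial>lborel)"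
    using nn_integral_lborel_diff_right[OF borel_measurable_Pair_slice[OF h]]
    by (simp add: nn_integral_completion)
  finally show ?thesis .
qed

lemma AE_pair_lebesgue_fst_neq_snd:
  "AE z in (lebesgue \<Otimes>\<^sub>M lebesgue :: ('a::euclidean_space \<times> 'a) measure). fst z \<noteq> snd z"
proof (rule lebesgue_pair.AE_pair_measure)
  have "(\<lambda>z::'a \<times> 'a. fst z - snd z) \<in> borel_measurable borel"
    by (intro borel_measurable_continuous_onI continuous_intros)
  then have "(\<lambda>z::'a \<times> 'a. fst z - snd z) \<in> borel_measurable (lebesgue \<Otimes>\<^sub>M lebesgue)"
    by (rule borel_measurable_lebesgue_pairI)
  from measurable_sets[OF this, of "- {0}"]
  show "{z \<in> space (lebesgue \<Otimes>\<^sub>M lebesgue). fst z \<noteq> snd z} \<in> sets (lebesgue \<Otimes>\<^sub>M lebesgue :: ('a \<times> 'a) measure)"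
    by (simp add: vimage_def Int_def conj_commute)
  show "AE x in lebesgue. AE y in lebesgue. fst (x, y) \<noteq> snd (x, y)"
    using AE_completion[OF AE_lborel_singleton] by (auto simp: eq_commute)
qed

section \<open>Integrals of powers of the norm\<close>

lemma emeasure_lborel_ball_eq:
  fixes r :: real assumes "0 \<le> r"
  shows "emeasure lborel (ball (0::'a::euclidean_space) r) = ennreal (measure lborel (ball (0::'a) 1) * r ^ DIM('a))"
proof -
  have "emeasure lebesgue (ball (0::'a) r) = ennreal (r ^ DIM('a)) * emeasure lebesgue (ball (0 :: 'a) 1)"
    using assms by (rule emeasure_lebesgue_ball_conv_unit_ball)
  also have "emeasure lebesgue (ball (0 :: 'a) 1) = ennreal (measure lborel (ball (0::'a) 1))"
    using emeasure_lborel_ball_finite[of "0::'a" 1] by (subst emeasure_eq_ennreal_measure) auto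
  finally show ?thesis using assms by (simp add: ennreal_mult'[symmetric] mult.commute)
qed

lemma power_diff_le_of_dist_le_1:
  fixes a b :: real assumes "0 \<le> a" "a \<le> b" "b - a \<le> 1"
  shows "b^n - a^n \<le> real n * b^(n-1)"
proof (induction n)
  case (Suc n)
  have "b*(b^n - a^n) \<le> b * (real n * b^(n-1))" using Suc assms by (intro mult_left_mono) auto
  also have "\<dots> = real n * b^n" by (cases n) auto
  finally have "b*(b^n - a^n) \<le> real n * b^n" .
  moreover have "a^n*(b-a) \<le> b^n * 1" using assms by (intro mult_mono power_mono) auto
  moreover have "b^Suc n - a^Suc n = b*(b^n - a^n) + a^n*(b-a)" by (simp add: algebra_simps)
  ultimately show ?case by (simp add: algebra_simps)
qed simp

lemma emeasure_lborel_annulus_le: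
  fixes r1 r2 :: real assumes "0 \<le> r1" "r1 \<le> r2" "r2 - r1 \<le> 1"
  shows "emeasure lborel (ball (0::'a::euclidean_space) r2 - ball 0 r1)
     \<le> ennreal (measure lborel (ball (0::'a) 1) * DIM('a) * r2 ^ (DIM('a) - 1))"
proof -
  have "emeasure lborel (ball (0::'a) r2 - ball 0 r1) = emeasure lborel (ball (0::'a) r2) - emeasure lborel (ball (0::'a) r1)"
    using assms emeasure_lborel_ball_finite[of "0::'a" r1] by (intro emeasure_Diff) auto
  also have "\<dots> = ennreal (measure lborel (ball (0::'a) 1) * (r2 ^ DIM('a) - r1 ^ DIM('a)))"
    using assms by (simp add: emeasure_lborel_ball_eq ennreal_minus right_diff_distrib)
  also have "\<dots> \<le> ennreal (measure lborel (ball (0::'a) 1) * (DIM('a) * r2 ^ (DIM('a) - 1)))"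
    using assms power_diff_le_of_dist_le_1[of r1 r2 "DIM('a)"] by (intro ennreal_leI mult_left_mono) auto
  finally show ?thesis by (simp add: mult.assoc)
qed

lemma ex_dyadic_interval:
  fixes x :: real assumes "1 \<le> x"
  shows "\<exists>k::nat. 2^k \<le> x \<and> x \<le> 2^Suc k"
proof -
  define k where "k = nat \<lfloor>log 2 x\<rfloor>"
  have "of_int \<lfloor>log 2 x\<rfloor> = real k" using assms by (simp add: k_def)
  then have "2 powr real k \<le> x \<and> x < 2 powr (real k + 1)"
    using floor_log_eq_powr_iff[of x 2 "\<lfloor>log 2 x\<rfloor>"] assms by simp
  then show ?thesis by (intro exI[of _ k]) (simp add: powr_realpow[symmetric] powr_add)
qed

lemma powr_le_on_dyadic_shell:
  fixes r t b :: real assumes "0 < r" "r \<le> t" "t \<le> 2*r"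
  shows "t powr b \<le> (1 + 2 powr b) * r powr b"
proof (cases "b \<ge> 0")
  case True
  have "t powr b \<le> (2*r) powr b" using assms True by (intro powr_mono2) auto
  then show ?thesis using assms by (simp add: powr_mult distrib_right add_increasing)
next
  case False
  then have "t powr b \<le> r powr b" using assms by (intro powr_mono2') auto
  then show ?thesis by (simp add: distrib_right add_increasing2)
qed

lemma nn_integral_norm_powr_shell_le:
  fixes r b :: real assumes r: "0 < r"
  shows "(\<integral>\<^sup>+z. indicator {z::'a::euclidean_space. r \<le> norm z \<and> norm z \<le> 2*r} z * ennreal (norm z powr b) \<partial>lborel)
     \<le> ennreal ((1 + 2 powr b) * measure lborel (ball (0::'a) 1) * 3 ^ DIM('a) * r powr (b + DIM('a)))"
proof -
  have "(\<integral>\<^sup>+z. indicator {z::'a. r \<le> norm z \<and> norm z \<le> 2*r} z * ennreal (norm z powr b) \<partial>lborel)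
     \<le> (\<integral>\<^sup>+z. ennreal ((1 + 2 powr b) * r powr b) * indicator (ball (0::'a) (3*r)) z \<partial>lborel)"
    using r powr_le_on_dyadic_shell[OF r]
    by (intro nn_integral_mono) (auto simp: indicator_def intro!: ennreal_leI)
  also have "\<dots> = ennreal ((1 + 2 powr b) * r powr b * (measure lborel (ball (0::'a) 1) * (3*r) ^ DIM('a)))"
    using r by (simp add: nn_integral_cmult_indicator emeasure_lborel_ball_eq ennreal_mult'[symmetric] add_pos_nonneg)
  also have "(1 + 2 powr b) * r powr b * (measure lborel (ball (0::'a) 1) * (3*r) ^ DIM('a)) =
        (1 + 2 powr b) * measure lborel (ball (0::'a) 1) * 3 ^ DIM('a) * r powr (b + DIM('a))"
    using r by (simp add: powr_add powr_realpow power_mult_distrib)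
  finally show ?thesis .
qed

lemma nn_integral_norm_powr_dyadic_le:
  fixes d q b :: real and S :: "'a::euclidean_space set"
  assumes d: "0 < d" and q: "0 < q" and Q: "q powr (b + DIM('a)) < 1"
    and cover: "\<And>z. z \<in> S \<Longrightarrow> \<exists>k::nat. d*q^k \<le> norm z \<and> norm z \<le> 2*(d*q^k)"
  shows "(\<integral>\<^sup>+z. indicator S z * ennreal (norm z powr b) \<partial>lborel)
     \<le> ennreal ((1 + 2 powr b) * measure lborel (ball (0::'a) 1) * 3 ^ DIM('a) * d powr (b + DIM('a)) / (1 - q powr (b + DIM('a))))"
proof -
  define e where "e = b + DIM('a)"
  define C where "C = (1 + 2 powr b) * measure lborel (ball (0::'a) 1) * 3 ^ DIM('a)"
  define shell where "shell k = {z::'a. d*q^k \<le> norm z \<and> norm z \<le> 2*(d*q^k)}" for k :: nat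
  have "(\<integral>\<^sup>+z. indicator S z * ennreal (norm z powr b) \<partial>lborel)
     \<le> (\<integral>\<^sup>+z. (\<Sum>k. indicator (shell k) z * ennreal (norm z powr b)) \<partial>lborel)"
  proof (rule nn_integral_mono)
    fix z :: 'a
    show "indicator S z * ennreal (norm z powr b) \<le> (\<Sum>k. indicator (shell k) z * ennreal (norm z powr b))"
    proof (cases "z \<in> S")
      case True
      then obtain k where "z \<in> shell k" using cover unfolding shell_def by blast
      then show ?thesis
        using True sum_le_suminf[of "\<lambda>k. indicator (shell k) z * ennreal (norm z powr b)" "{k}"]
        by (simp add: summableI)
    qed simp
  qed
  also have "\<dots> = (\<Sum>k. \<integral>\<^sup>+z. indicator (shell k) z * ennreal (norm z powr b) \<partial>lborel)"
    by (rule nn_integral_suminf) (auto simp: shell_def)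
  also have "\<dots> \<le> (\<Sum>k. ennreal (C * d powr e * (q powr e) ^ k))"
  proof (rule suminf_le)
    fix k :: nat
    have "(d*q^k) powr e = d powr e * (q powr e) ^ k"
      using d q by (simp add: powr_mult powr_power powr_realpow[symmetric] powr_powr mult.commute)
    then show "(\<integral>\<^sup>+z. indicator (shell k) z * ennreal (norm z powr b) \<partial>lborel) \<le> ennreal (C * d powr e * (q powr e) ^ k)"
      using nn_integral_norm_powr_shell_le[of "d*q^k" b, where 'a='a] d q
      unfolding shell_def C_def e_def by (simp add: mult.assoc)
  qed (simp_all add: summableI)
  also have "(\<Sum>k. ennreal (C * d powr e * (q powr e) ^ k)) = ennreal (C * d powr e * (1 / (1 - q powr e)))"
    using Q unfolding e_def C_def
    by (intro suminf_ennreal_eq sums_mult geometric_sums) (auto simp: add_nonneg_nonneg)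
  finally show ?thesis unfolding C_def e_def by simp
qed

definition truncated_kernel :: "real \<Rightarrow> real \<Rightarrow> 'a::real_normed_vector \<Rightarrow> ennreal" where
  "truncated_kernel a p z = ennreal (min 1 (norm z) powr p / norm z powr a)"

definition tail_kernel :: "real \<Rightarrow> real \<Rightarrow> 'a::real_normed_vector \<Rightarrow> ennreal" where
  "tail_kernel a d z = indicator {z. d \<le> norm z} z * ennreal (norm z powr (-a))"

lemma borel_measurable_truncated_kernel [measurable]: "truncated_kernel a p \<in> borel_measurable borel"
  unfolding truncated_kernel_def by measurable

lemma tail_kernel_eq: "tail_kernel a d z = (if d \<le> norm z then ennreal (norm z powr (-a)) else 0)"
  unfolding tail_kernel_def by simp

lemma nn_integral_tail_kernel_le:
  fixes a :: real
  assumes a: "real DIM('a::euclidean_space) < a"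
  obtains Ct where "0 \<le> Ct" "\<And>d. 0 < d \<Longrightarrow> (\<integral>\<^sup>+z. tail_kernel a d (z::'a) \<partial>lborel) \<le> ennreal (Ct * d powr (DIM('a) - a))"
proof
  define Ct where "Ct = (1 + 2 powr (-a)) * measure lborel (ball (0::'a) 1) * 3 ^ DIM('a) / (1 - 2 powr (-a + DIM('a)))"
  have lt: "2 powr (-a + DIM('a)) < (1::real)" using a by (simp add: powr_less_one)
  show "0 \<le> Ct" unfolding Ct_def using lt by (intro divide_nonneg_pos) (auto simp: add_nonneg_nonneg)
  fix d :: real assume d: "0 < d"
  have "(\<integral>\<^sup>+z. indicator {z::'a. d \<le> norm z} z * ennreal (norm z powr (-a)) \<partial>lborel)
      \<le> ennreal ((1 + 2 powr (-a)) * measure lborel (ball (0::'a) 1) * 3 ^ DIM('a) * d powr (-a + DIM('a))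
          / (1 - 2 powr (-a + DIM('a))))"
  proof (rule nn_integral_norm_powr_dyadic_le)
    fix z :: 'a assume "z \<in> {z. d \<le> norm z}"
    then obtain k where "2^k \<le> norm z / d \<and> norm z / d \<le> 2^Suc k"
      using ex_dyadic_interval[of "norm z / d"] d by auto
    then show "\<exists>k. d * 2 ^ k \<le> norm z \<and> norm z \<le> 2 * (d * 2 ^ k)"
      using d by (intro exI[of _ k]) (simp add: field_simps)
  qed (use d lt in auto)
  also have "\<dots> = ennreal (Ct * d powr (DIM('a) - a))" unfolding Ct_def by (simp add: field_simps)
  finally show "(\<integral>\<^sup>+z. tail_kernel a d (z::'a) \<partial>lborel) \<le> ennreal (Ct * d powr (DIM('a) - a))"
    by (simp add: tail_kernel_def)
qed

lemma nn_integral_norm_powr_unit_ball_finite: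
  fixes b :: real
  assumes b: "0 < b + DIM('a::euclidean_space)"
  shows "(\<integral>\<^sup>+z. indicator {z::'a. z \<noteq> 0 \<and> norm z < 1} z * ennreal (norm z powr b) \<partial>lborel) < \<infinity>"
proof -
  have lt: "(1/2) powr (b + DIM('a)) < (1::real)"
    using b powr_less_mono2[of "b + DIM('a)" "1/2" 1] by simp
  have "(\<integral>\<^sup>+z. indicator {z::'a. z \<noteq> 0 \<and> norm z < 1} z * ennreal (norm z powr b) \<partial>lborel)
      \<le> ennreal ((1 + 2 powr b) * measure lborel (ball (0::'a) 1) * 3 ^ DIM('a) * (1/2) powr (b + DIM('a)) / (1 - (1/2) powr (b + DIM('a))))"
  proof (rule nn_integral_norm_powr_dyadic_le)
    fix z :: 'a assume "z \<in> {z. z \<noteq> 0 \<and> norm z < 1}"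
    then have "1 \<le> 1 / norm z" "0 < norm z" by simp_all
    then obtain k where "2^k \<le> 1 / norm z \<and> 1 / norm z \<le> 2^Suc k"
      using ex_dyadic_interval by blast
    then have "(1/2) * (1/2)^k \<le> norm z \<and> norm z \<le> 2 * ((1/2) * (1/2)^k)"
      using \<open>0 < norm z\<close> by (simp add: field_simps power_one_over)
    then show "\<exists>k. 1 / 2 * (1 / 2) ^ k \<le> norm z \<and> norm z \<le> 2 * (1 / 2 * (1 / 2) ^ k)" by blast
  qed (use lt in auto)
  then show ?thesis using order_le_less_trans by fastforce
qed

lemma nn_integral_truncated_kernel_finite:
  fixes p a :: real
  assumes p: "0 < p" and a: "real DIM('a::euclidean_space) < a" "a < DIM('a) + p"
  shows "(\<integral>\<^sup>+z. truncated_kernel a p (z::'a) \<partial>lborel) < \<infinity>"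
proof -
  obtain Ct where "(\<integral>\<^sup>+z. tail_kernel a 1 (z::'a) \<partial>lborel) \<le> ennreal (Ct * 1 powr (DIM('a) - a))"
    using nn_integral_tail_kernel_le[OF a(1)] by (metis zero_less_one)
  then have tail: "(\<integral>\<^sup>+z. tail_kernel a 1 (z::'a) \<partial>lborel) < \<infinity>"
    using order_le_less_trans by fastforce
  have "(\<integral>\<^sup>+z. truncated_kernel a p (z::'a) \<partial>lborel) \<le>
     (\<integral>\<^sup>+z. indicator {z::'a. z \<noteq> 0 \<and> norm z < 1} z * ennreal (norm z powr (p - a)) + tail_kernel a 1 z \<partial>lborel)"
  proof (rule nn_integral_mono)
    fix z :: 'a
    consider "z = 0" | "z \<noteq> 0" "norm z < 1" | "1 \<le> norm z" by fastforce
    then show "truncated_kernel a p z \<le> indicator {z::'a. z \<noteq> 0 \<and> norm z < 1} z * ennreal (norm z powr (p - a)) + tail_kernel a 1 z"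
      by cases (use p in \<open>auto simp: truncated_kernel_def tail_kernel_def powr_diff powr_minus_divide\<close>)
  qed
  also have "\<dots> = (\<integral>\<^sup>+z. indicator {z::'a. z \<noteq> 0 \<and> norm z < 1} z * ennreal (norm z powr (p - a)) \<partial>lborel)
      + (\<integral>\<^sup>+z. tail_kernel a 1 (z::'a) \<partial>lborel)"
    by (rule nn_integral_add) (auto simp: tail_kernel_def)
  also have "\<dots> < \<infinity>"
    using nn_integral_norm_powr_unit_ball_finite[of "p - a", where 'a='a] a tail by simp
  finally show ?thesis .
qed

text \<open>Cut \<open>B\<^sub>\<rho>\<close> into annuli of width one on which the distance to the sphere
  of radius \<open>\<rho> + 1\<close> is at least \<open>j\<close>.\<close>

lemma dist_sphere_powr_le_sum_annuli:
  fixes \<rho> \<sigma> :: real and x :: "'a::real_normed_vector"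
  assumes x: "norm x < \<rho>" and \<sigma>: "0 < \<sigma>"
  shows "ennreal ((\<rho> + 1 - norm x) powr (-\<sigma>))
    \<le> (\<Sum>j\<in>{1..nat \<lceil>\<rho>\<rceil>}. ennreal (real j powr (-\<sigma>)) * indicator (ball 0 (\<rho> + 1 - real j) - ball 0 (max 0 (\<rho> - real j))) x)"
proof -
  define j where "j = nat (\<lceil>\<rho> + 1 - norm x\<rceil> - 1)"
  have j: "real j < \<rho> + 1 - norm x" "\<rho> + 1 - norm x \<le> real j + 1" "1 \<le> j" "j \<le> nat \<lceil>\<rho>\<rceil>"
    using x norm_ge_zero[of x] unfolding j_def by linarith+
  then have "x \<in> ball 0 (\<rho> + 1 - real j) - ball 0 (max 0 (\<rho> - real j))"
    using norm_ge_zero[of x] by (auto simp: max_def)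
  then have "ennreal ((\<rho> + 1 - norm x) powr (-\<sigma>))
      \<le> ennreal (real j powr (-\<sigma>)) * indicator (ball 0 (\<rho> + 1 - real j) - ball 0 (max 0 (\<rho> - real j))) x"
    using j \<sigma> by (auto intro!: ennreal_leI powr_mono2')
  also have "\<dots> \<le> (\<Sum>j\<in>{1..nat \<lceil>\<rho>\<rceil>}. ennreal (real j powr (-\<sigma>)) * indicator (ball 0 (\<rho> + 1 - real j) - ball 0 (max 0 (\<rho> - real j))) x)"
    using j by (intro member_le_sum) auto
  finally show ?thesis .
qed

lemma nn_integral_ball_dist_sphere_powr_le:
  fixes \<rho> \<sigma> :: real assumes \<rho>: "1 \<le> \<rho>" and \<sigma>: "0 < \<sigma>"
  shows "(\<integral>\<^sup>+x. indicator (ball (0::'a::euclidean_space) \<rho>) x * ennreal ((\<rho> + 1 - norm x) powr (-\<sigma>)) \<partial>lborel)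
    \<le> ennreal (measure lborel (ball (0::'a) 1) * DIM('a) * \<rho> ^ (DIM('a) - 1) * (\<Sum>j=1..nat \<lceil>\<rho>\<rceil>. real j powr (-\<sigma>)))"
proof -
  define J where "J = nat \<lceil>\<rho>\<rceil>"
  define S where "S j = ball (0::'a) (\<rho> + 1 - real j) - ball 0 (max 0 (\<rho> - real j))" for j :: nat
  define M where "M = measure lborel (ball (0::'a) 1) * DIM('a) * \<rho> ^ (DIM('a) - 1)"
  have "(\<integral>\<^sup>+x. indicator (ball (0::'a) \<rho>) x * ennreal ((\<rho> + 1 - norm x) powr (-\<sigma>)) \<partial>lborel)
     \<le> (\<integral>\<^sup>+x. (\<Sum>j\<in>{1..J}. ennreal (real j powr (-\<sigma>)) * indicator (S j) x) \<partial>lborel)"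
    using dist_sphere_powr_le_sum_annuli[OF _ \<sigma>] unfolding S_def J_def
    by (intro nn_integral_mono) (auto simp: indicator_def)
  also have "\<dots> = (\<Sum>j\<in>{1..J}. ennreal (real j powr (-\<sigma>)) * emeasure lborel (S j))"
  proof -
    have S: "S j \<in> sets lborel" for j unfolding S_def by simp
    then show ?thesis
      by (subst nn_integral_sum) (auto intro!: sum.cong nn_integral_cmult_indicator)
  qed
  also have "\<dots> \<le> (\<Sum>j\<in>{1..J}. ennreal (real j powr (-\<sigma>)) * ennreal M)"
  proof (intro sum_mono mult_left_mono)
    fix j assume j: "j \<in> {1..J}"
    then have "real j \<le> of_int \<lceil>\<rho>\<rceil>" using \<rho> unfolding J_def by auto
    then have "0 < \<rho> + 1 - real j" by linarith
    then have "emeasure lborel (S j) \<le> ennreal (measure lborel (ball (0::'a) 1) * DIM('a) * (\<rho> + 1 - real j) ^ (DIM('a) - 1))"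
      unfolding S_def by (intro emeasure_lborel_annulus_le) auto
    also have "\<dots> \<le> ennreal M"
      using j \<open>0 < \<rho> + 1 - real j\<close> unfolding M_def by (intro ennreal_leI mult_left_mono power_mono) auto
    finally show "emeasure lborel (S j) \<le> ennreal M" .
  qed simp
  also have "\<dots> = ennreal (M * (\<Sum>j=1..J. real j powr (-\<sigma>)))"
    using \<rho> by (simp add: M_def ennreal_mult'[symmetric] sum_distrib_left mult_ac)
  finally show ?thesis unfolding M_def J_def .
qed

section \<open>A minimizer beats the ramp competitor\<close>

definition interaction_domain :: "real \<Rightarrow> ('a::real_normed_vector \<times> 'a) set" where
  "interaction_domain R = - ((- ball 0 R) \<times> (- ball 0 R))"

definition interaction ::
  "(real \<Rightarrow> 'a \<Rightarrow> real) \<Rightarrow> ('a::euclidean_space \<Rightarrow> real) \<Rightarrow> ('a \<times> 'a) set \<Rightarrow> ennreal" where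
  "interaction F f S =
     (\<integral>\<^sup>+z. indicator S z * ennreal (F (f (fst z) - f (snd z)) (fst z - snd z)) \<partial>(lebesgue \<Otimes>\<^sub>M lebesgue))"

definition potential :: "(real \<Rightarrow> real) \<Rightarrow> ('a::euclidean_space \<Rightarrow> real) \<Rightarrow> 'a set \<Rightarrow> ennreal" where
  "potential W f S = (\<integral>\<^sup>+x. indicator S x * ennreal (W (f x)) \<partial>lebesgue)"

lemma energy_eq_interaction_plus_potential:
  "energy F W u R = interaction F u (interaction_domain R) + potential W u (ball 0 R)"
  unfolding energy_def interaction_def potential_def interaction_domain_def by simp

lemma interaction_domain_mono: "R \<le> R' \<Longrightarrow> interaction_domain R \<subseteq> interaction_domain R'"
  unfolding interaction_domain_def by auto

lemma interaction_domain_sets: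
  "interaction_domain R \<in> sets (lebesgue \<Otimes>\<^sub>M lebesgue :: ('a::euclidean_space \<times> 'a) measure)"
proof -
  have "(- ball (0::'a) R) \<times> (- ball 0 R) \<in> sets (lebesgue \<Otimes>\<^sub>M lebesgue)"
    by (intro pair_measureI) (auto simp: Compl_eq_Diff_UNIV)
  from sets.compl_sets[OF this] show ?thesis
    unfolding interaction_domain_def by (simp add: space_pair_measure Compl_eq_Diff_UNIV)
qed

lemma borel_measurable_interaction_integrand:
  fixes F :: "real \<Rightarrow> 'a::euclidean_space \<Rightarrow> real"
  assumes F: "(\<lambda>z. F (fst z) (snd z)) \<in> borel_measurable borel" and f: "f \<in> borel_measurable lebesgue"
    and S: "S \<in> sets (lebesgue \<Otimes>\<^sub>M lebesgue)"
  shows "(\<lambda>z. indicator S z * ennreal (F (f (fst z) - f (snd z)) (fst z - snd z)))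
    \<in> borel_measurable (lebesgue \<Otimes>\<^sub>M lebesgue)"
proof -
  have "(\<lambda>z::'a\<times>'a. fst z - snd z) \<in> borel_measurable borel"
    by (intro borel_measurable_continuous_onI continuous_intros)
  moreover have "(\<lambda>z. f (fst z) - f (snd z)) \<in> borel_measurable (lebesgue \<Otimes>\<^sub>M lebesgue)"
    using f by measurable
  ultimately have "(\<lambda>z. (f (fst z) - f (snd z), fst z - snd z)) \<in> (lebesgue \<Otimes>\<^sub>M lebesgue) \<rightarrow>\<^sub>M (borel \<Otimes>\<^sub>M borel)"
    by (auto intro: measurable_Pair borel_measurable_lebesgue_pairI)
  from measurable_compose[OF this[unfolded borel_prod] F]
  have [measurable]: "(\<lambda>z. F (f (fst z) - f (snd z)) (fst z - snd z)) \<in> borel_measurable (lebesgue \<Otimes>\<^sub>M lebesgue)"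
    by simp
  show ?thesis using S by measurable
qed

lemma interaction_split:
  fixes F :: "real \<Rightarrow> 'a::euclidean_space \<Rightarrow> real"
  assumes "(\<lambda>z. F (fst z) (snd z)) \<in> borel_measurable borel" "f \<in> borel_measurable lebesgue"
    and "S \<in> sets (lebesgue \<Otimes>\<^sub>M lebesgue)" "T \<in> sets (lebesgue \<Otimes>\<^sub>M lebesgue)" "S \<subseteq> T"
  shows "interaction F f T = interaction F f S + interaction F f (T - S)"
proof -
  have "interaction F f T = (\<integral>\<^sup>+ z. indicator S z * ennreal (F (f (fst z) - f (snd z)) (fst z - snd z))
      + indicator (T - S) z * ennreal (F (f (fst z) - f (snd z)) (fst z - snd z)) \<partial>(lebesgue \<Otimes>\<^sub>M lebesgue))"
    unfolding interaction_def using assms(5) by (intro nn_integral_cong) (auto simp: indicator_def)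
  also have "\<dots> = interaction F f S + interaction F f (T - S)"
    unfolding interaction_def using assms
    by (intro nn_integral_add borel_measurable_interaction_integrand) auto
  finally show ?thesis .
qed

lemma potential_split:
  fixes f :: "'a::euclidean_space \<Rightarrow> real"
  assumes "W \<in> borel_measurable borel" "f \<in> borel_measurable lebesgue"
    and "S \<in> sets lebesgue" "T \<in> sets lebesgue" "S \<subseteq> T"
  shows "potential W f T = potential W f S + potential W f (T - S)"
proof -
  have "potential W f T = (\<integral>\<^sup>+ x. indicator S x * ennreal (W (f x)) + indicator (T - S) x * ennreal (W (f x)) \<partial>lebesgue)"
    unfolding potential_def using assms(5) by (intro nn_integral_cong) (auto simp: indicator_def)
  also have "\<dots> = potential W f S + potential W f (T - S)"
    unfolding potential_def using assms by (intro nn_integral_add) auto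
  finally show ?thesis .
qed

definition ramp :: "real \<Rightarrow> 'a::real_normed_vector \<Rightarrow> real" where
  "ramp R x = -1 + 2 * min 1 (max 0 (norm x - R - 1))"

lemma borel_measurable_ramp: "ramp R \<in> borel_measurable (lebesgue :: 'a::euclidean_space measure)"
  unfolding ramp_def by (intro borel_measurable_lebesgueI borel_measurable_continuous_onI continuous_intros)

lemma ramp_inner: "norm x < R + 1 \<Longrightarrow> ramp R x = -1"
  unfolding ramp_def by simp

lemma ramp_outer: "R + 2 \<le> norm x \<Longrightarrow> ramp R x = 1"
  unfolding ramp_def by simp

lemma ramp_bounds: "-1 \<le> ramp R x" "ramp R x \<le> 1"
  unfolding ramp_def by auto

lemma abs_ramp_diff_le: "\<bar>ramp R x - ramp R y\<bar> \<le> 2 * min 1 (norm (x - y))"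
proof -
  define a b where "a = min 1 (max 0 (norm x - R - 1))" and "b = min 1 (max 0 (norm y - R - 1))"
  have "\<bar>a - b\<bar> \<le> min 1 \<bar>(norm x - R - 1) - (norm y - R - 1)\<bar>"
    unfolding a_def b_def by (auto simp: min_def max_def abs_if)
  also have "\<dots> \<le> min 1 (norm (x - y))"
    using norm_triangle_ineq3[of x y] by (intro min.mono) auto
  finally have "\<bar>a - b\<bar> \<le> min 1 (norm (x - y))" .
  moreover have "ramp R x - ramp R y = 2 * (a - b)"
    unfolding ramp_def a_def b_def by simp
  ultimately show ?thesis by (simp only: abs_mult) simp
qed

lemma interaction_min_ramp_pointwise_le:
  fixes F :: "real \<Rightarrow> 'a::euclidean_space \<Rightarrow> real" and u :: "'a \<Rightarrow> real"
  assumes F_mono: "\<And>t1 t2 x. x \<noteq> 0 \<Longrightarrow> \<bar>t1\<bar> \<le> \<bar>t2\<bar> \<Longrightarrow> F t1 x \<le> F t2 x"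
    and u_bdd: "\<And>x. \<bar>u x\<bar> \<le> 1"
  shows "ennreal (F (min (u x) (ramp R x) - min (u y) (ramp R y)) (x - y)) \<le> ennreal (F (ramp R x - ramp R y) (x - y))
     + indicator (- interaction_domain (R+1)) (x, y) * ennreal (F (u x - u y) (x - y))"
proof (cases "x = y")
  case False
  then have xy: "x - y \<noteq> 0" by simp
  show ?thesis
  proof (cases "(x, y) \<in> interaction_domain (R+1)")
    case True
    then have "norm x < R + 1 \<or> norm y < R + 1" unfolding interaction_domain_def by auto
    then have "\<bar>min (u x) (ramp R x) - min (u y) (ramp R y)\<bar> \<le> \<bar>ramp R x - ramp R y\<bar>"
      using u_bdd[of x] u_bdd[of y] ramp_bounds[of R x] ramp_bounds[of R y]
      by (auto simp: ramp_inner)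
    then have "F (min (u x) (ramp R x) - min (u y) (ramp R y)) (x - y) \<le> F (ramp R x - ramp R y) (x - y)"
      by (rule F_mono[OF xy])
    then show ?thesis by (intro add_increasing2 ennreal_leI) auto
  next
    case False
    let ?t = "min (u x) (ramp R x) - min (u y) (ramp R y)"
    have "\<bar>?t\<bar> \<le> max \<bar>u x - u y\<bar> \<bar>ramp R x - ramp R y\<bar>"
      by (auto simp: min_def max_def abs_if)
    then have "F ?t (x - y) \<le> F (u x - u y) (x - y) \<or> F ?t (x - y) \<le> F (ramp R x - ramp R y) (x - y)"
      using F_mono[OF xy] by (auto simp: max_def split: if_splits)
    then show ?thesis
    proof
      assume "F ?t (x - y) \<le> F (u x - u y) (x - y)"
      then have "ennreal (F ?t (x - y)) \<le> ennreal (F (u x - u y) (x - y))" by (rule ennreal_leI)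
      then show ?thesis using False by (auto intro: add_increasing)
    next
      assume "F ?t (x - y) \<le> F (ramp R x - ramp R y) (x - y)"
      then show ?thesis by (intro add_increasing2 ennreal_leI) auto
    qed
  qed
qed simp

lemma interaction_min_ramp_le:
  fixes F :: "real \<Rightarrow> 'a::euclidean_space \<Rightarrow> real" and u :: "'a \<Rightarrow> real"
  assumes F_meas: "(\<lambda>z. F (fst z) (snd z)) \<in> borel_measurable borel"
    and F_mono: "\<And>t1 t2 x. x \<noteq> 0 \<Longrightarrow> \<bar>t1\<bar> \<le> \<bar>t2\<bar> \<Longrightarrow> F t1 x \<le> F t2 x"
    and u_meas: "u \<in> borel_measurable lebesgue" and u_bdd: "\<And>x. \<bar>u x\<bar> \<le> 1"
  shows "interaction F (\<lambda>x. min (u x) (ramp R x)) (interaction_domain (R+2))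
    \<le> interaction F (ramp R) (interaction_domain (R+2))
      + interaction F u (interaction_domain (R+2) - interaction_domain (R+1))"
proof -
  let ?D = "interaction_domain (R+2) :: ('a \<times> 'a) set"
  have "interaction F (\<lambda>x. min (u x) (ramp R x)) ?D
    \<le> (\<integral>\<^sup>+z. indicator ?D z * ennreal (F (ramp R (fst z) - ramp R (snd z)) (fst z - snd z))
      + indicator (?D - interaction_domain (R+1)) z * ennreal (F (u (fst z) - u (snd z)) (fst z - snd z))
      \<partial>(lebesgue \<Otimes>\<^sub>M lebesgue))"
    unfolding interaction_def
  proof (rule nn_integral_mono)
    fix z :: "'a \<times> 'a"
    show "indicator ?D z * ennreal (F (min (u (fst z)) (ramp R (fst z)) - min (u (snd z)) (ramp R (snd z))) (fst z - snd z))
      \<le> indicator ?D z * ennreal (F (ramp R (fst z) - ramp R (snd z)) (fst z - snd z))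
      + indicator (?D - interaction_domain (R+1)) z * ennreal (F (u (fst z) - u (snd z)) (fst z - snd z))"
      using interaction_min_ramp_pointwise_le[OF F_mono u_bdd, where R=R and x="fst z" and y="snd z"]
      by (cases "z \<in> ?D") (auto simp: indicator_def)
  qed
  also have "\<dots> = interaction F (ramp R) ?D + interaction F u (?D - interaction_domain (R+1))"
    unfolding interaction_def
    using F_meas u_meas borel_measurable_ramp interaction_domain_sets
    by (intro nn_integral_add borel_measurable_interaction_integrand) auto
  finally show ?thesis .
qed

lemma potential_min_ramp_le:
  fixes W :: "real \<Rightarrow> real" and u :: "'a::euclidean_space \<Rightarrow> real"
  assumes W_meas: "W \<in> borel_measurable borel" and W1: "W (-1) = 0"
    and u_meas: "u \<in> borel_measurable lebesgue" and u_bdd: "\<And>x. \<bar>u x\<bar> \<le> 1"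
  shows "potential W (\<lambda>x. min (u x) (ramp R x)) (ball 0 (R+2))
    \<le> potential W (ramp R) (ball (0::'a) (R+2)) + potential W u (ball 0 (R+2) - ball 0 (R+1))"
proof -
  have "potential W (\<lambda>x. min (u x) (ramp R x)) (ball 0 (R+2))
    \<le> (\<integral>\<^sup>+x. indicator (ball 0 (R+2)) x * ennreal (W (ramp R x))
       + indicator (ball 0 (R+2) - ball 0 (R+1)) x * ennreal (W (u x)) \<partial>lebesgue)"
    unfolding potential_def
  proof (rule nn_integral_mono)
    fix x :: 'a
    have "ennreal (W (min (u x) (ramp R x))) \<le> ennreal (W (ramp R x)) + ennreal (W (u x))"
      by (cases "u x \<le> ramp R x") (auto intro: add_increasing add_increasing2)
    moreover have "min (u x) (ramp R x) = -1" if "norm x < R + 1"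
      using that u_bdd[of x] by (simp add: ramp_inner)
    ultimately show "indicator (ball 0 (R+2)) x * ennreal (W (min (u x) (ramp R x)))
      \<le> indicator (ball 0 (R+2)) x * ennreal (W (ramp R x))
       + indicator (ball 0 (R+2) - ball 0 (R+1)) x * ennreal (W (u x))"
      using W1 by (auto simp: indicator_def)
  qed
  also have "\<dots> = potential W (ramp R) (ball (0::'a) (R+2)) + potential W u (ball 0 (R+2) - ball 0 (R+1))"
    unfolding potential_def
  proof (rule nn_integral_add)
    have "(\<lambda>x. W (ramp R x)) \<in> borel_measurable lebesgue" "(\<lambda>x. W (u x)) \<in> borel_measurable lebesgue"
      using measurable_compose[OF borel_measurable_ramp W_meas] measurable_compose[OF u_meas W_meas] by auto
    moreover have "ball (0::'a) r \<in> sets lebesgue" for r by simp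
    ultimately show "(\<lambda>x. indicator (ball (0::'a) (R+2)) x * ennreal (W (ramp R x))) \<in> borel_measurable lebesgue"
      "(\<lambda>x. indicator (ball (0::'a) (R+2) - ball 0 (R+1)) x * ennreal (W (u x))) \<in> borel_measurable lebesgue"
      by measurable
  qed
  finally show ?thesis .
qed

lemma energy_mono: "R \<le> R' \<Longrightarrow> energy F W u R \<le> energy F W u R'"
  unfolding energy_def
  by (intro add_mono nn_integral_mono mult_right_mono) (auto simp: indicator_def)

lemma energy_split_annulus:
  fixes F :: "real \<Rightarrow> real^'n \<Rightarrow> real" and W :: "real \<Rightarrow> real" and u :: "real^'n \<Rightarrow> real"
  assumes F_meas: "(\<lambda>z. F (fst z) (snd z)) \<in> borel_measurable borel" and W_meas: "W \<in> borel_measurable borel"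
    and u_meas: "u \<in> borel_measurable lebesgue" and R: "R \<le> R'"
  shows "energy F W u R' = energy F W u R
    + (interaction F u (interaction_domain R' - interaction_domain R) + potential W u (ball 0 R' - ball 0 R))"
proof -
  have "interaction F u (interaction_domain R') = interaction F u (interaction_domain R)
      + interaction F u (interaction_domain R' - interaction_domain R)"
    using R by (intro interaction_split[OF F_meas u_meas] interaction_domain_sets interaction_domain_mono)
  moreover have "potential W u (ball 0 R') = potential W u (ball 0 R) + potential W u (ball 0 R' - ball 0 R)"
    using R by (intro potential_split[OF W_meas u_meas]) auto
  ultimately show ?thesis
    unfolding energy_eq_interaction_plus_potential by (simp add: ac_simps)
qed

text \<open>Comparing \<open>u\<close> with the competitor \<open>min u (ramp R)\<close>, the contributions of
  \<open>B\<^sub>R\<^sub>+\<^sub>2 \<setminus> B\<^sub>R\<^sub>+\<^sub>1\<close> appear on both sides and cancel because the energy of \<open>u\<close> is finite.\<close>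

lemma minimizer_energy_le_ramp:
  fixes F :: "real \<Rightarrow> real^'n \<Rightarrow> real" and W :: "real \<Rightarrow> real" and u :: "real^'n \<Rightarrow> real"
  assumes F_meas: "(\<lambda>z. F (fst z) (snd z)) \<in> borel_measurable borel"
    and F_mono: "\<And>t1 t2 x. x \<noteq> 0 \<Longrightarrow> \<bar>t1\<bar> \<le> \<bar>t2\<bar> \<Longrightarrow> F t1 x \<le> F t2 x"
    and W_meas: "W \<in> borel_measurable borel" and W1: "W (-1) = 0"
    and u_bdd: "\<And>x. \<bar>u x\<bar> \<le> 1" and min: "is_minimizer F W u (R + 2)"
  shows "energy F W u R \<le> interaction F (ramp R) (interaction_domain (R+2)) + potential W (ramp R) (ball (0::real^'n) (R+2))"
    (is "_ \<le> ?Z")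
proof -
  have u_meas: "u \<in> borel_measurable lebesgue" and fin: "energy F W u (R+2) < \<infinity>"
    using min unfolding is_minimizer_def by auto
  define v where "v x = min (u x) (ramp R x)" for x
  have "v \<in> borel_measurable lebesgue"
    unfolding v_def using u_meas borel_measurable_ramp by measurable
  moreover have "AE x in lebesgue. x \<notin> ball 0 (R + 2) \<longrightarrow> v x = u x"
    using u_bdd by (auto simp: v_def ramp_outer abs_le_iff)
  ultimately have min_v: "energy F W u (R+2) \<le> energy F W v (R+2)"
    using min unfolding is_minimizer_def by blast
  define Y where "Y = interaction F u (interaction_domain (R+2) - interaction_domain (R+1))
    + potential W u (ball (0::real^'n) (R+2) - ball 0 (R+1))"
  have u_split: "energy F W u (R+2) = energy F W u (R+1) + Y"
    unfolding Y_def by (rule energy_split_annulus[OF F_meas W_meas u_meas]) simp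
  have "energy F W v (R+2) \<le> (interaction F (ramp R) (interaction_domain (R+2))
      + interaction F u (interaction_domain (R+2) - interaction_domain (R+1)))
      + (potential W (ramp R) (ball (0::real^'n) (R+2)) + potential W u (ball 0 (R+2) - ball 0 (R+1)))"
    unfolding energy_eq_interaction_plus_potential v_def
    by (intro add_mono interaction_min_ramp_le[OF F_meas F_mono u_meas u_bdd]
        potential_min_ramp_le[OF W_meas W1 u_meas u_bdd])
  then have v_le: "energy F W v (R+2) \<le> ?Z + Y" unfolding Y_def by (simp add: ac_simps)
  have "Y + energy F W u (R+1) = energy F W u (R+2)" using u_split by (rule trans[OF add.commute sym])
  also note min_v
  also note v_le
  finally have "Y + energy F W u (R+1) \<le> Y + ?Z" by (simp only: add.commute)
  moreover have "Y \<noteq> \<infinity>" using fin u_split by auto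
  ultimately have "energy F W u (R+1) \<le> ?Z" by (simp add: ennreal_add_left_cancel_le)
  with energy_mono[of R "R+1" F W u] show ?thesis by simp
qed

section \<open>Energy of the ramp\<close>

lemma F_ramp_le_truncated_kernel:
  fixes F :: "real \<Rightarrow> 'a::euclidean_space \<Rightarrow> real"
  assumes F_upper: "\<And>t x. x \<noteq> 0 \<Longrightarrow> F t x \<le> c * (\<bar>t\<bar> powr p / norm x powr a)"
    and c: "0 < c" and p: "0 \<le> p" and xy: "x \<noteq> y"
  shows "ennreal (F (ramp R x - ramp R y) (x - y)) \<le> ennreal (c * 2 powr p) * truncated_kernel a p (x - y)"
proof -
  have "F (ramp R x - ramp R y) (x - y) \<le> c * (\<bar>ramp R x - ramp R y\<bar> powr p / norm (x - y) powr a)"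
    using F_upper xy by simp
  also have "\<dots> \<le> c * ((2 * min 1 (norm (x - y))) powr p / norm (x - y) powr a)"
    using c p abs_ramp_diff_le by (intro mult_left_mono divide_right_mono powr_mono2) auto
  also have "\<dots> = c * 2 powr p * (min 1 (norm (x - y)) powr p / norm (x - y) powr a)"
    by (simp add: powr_mult)
  finally show ?thesis
    using c unfolding truncated_kernel_def by (simp add: ennreal_mult'[symmetric] ennreal_leI)
qed

lemma F_ramp_le_norm_powr:
  fixes F :: "real \<Rightarrow> 'a::euclidean_space \<Rightarrow> real"
  assumes F_upper: "\<And>t x. x \<noteq> 0 \<Longrightarrow> F t x \<le> c * (\<bar>t\<bar> powr p / norm x powr a)"
    and c: "0 < c" and p: "0 \<le> p" and xy: "x \<noteq> y"
  shows "F (ramp R x - ramp R y) (x - y) \<le> c * 2 powr p * norm (x - y) powr (-a)"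
proof -
  have "F (ramp R x - ramp R y) (x - y) \<le> c * (\<bar>ramp R x - ramp R y\<bar> powr p / norm (x - y) powr a)"
    using F_upper xy by simp
  also have "\<dots> \<le> c * (2 powr p / norm (x - y) powr a)"
    using c p ramp_bounds[of R x] ramp_bounds[of R y]
    by (intro mult_left_mono divide_right_mono powr_mono2) auto
  finally show ?thesis by (simp add: powr_minus divide_inverse mult.assoc)
qed

lemma interaction_ramp_pointwise_le:
  fixes F :: "real \<Rightarrow> 'a::euclidean_space \<Rightarrow> real"
  assumes F_upper: "\<And>t x. x \<noteq> 0 \<Longrightarrow> F t x \<le> c * (\<bar>t\<bar> powr p / norm x powr a)"
    and c: "0 < c" and p: "0 \<le> p" and xy: "x \<noteq> y" and D: "(x, y) \<in> interaction_domain (R+2)"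
  defines "S \<equiv> ball 0 (R+2) - ball 0 (R+1)" and "B \<equiv> ball 0 (R+1)"
  shows "ennreal (F (ramp R x - ramp R y) (x - y)) \<le> ennreal (c * 2 powr p) *
    (indicator S x * truncated_kernel a p (x - y) + indicator S y * truncated_kernel a p (x - y)
     + indicator B x * tail_kernel a (R + 2 - norm x) (x - y)
     + indicator B y * tail_kernel a (R + 2 - norm y) (x - y))"
    (is "_ \<le> _ * (?k1 + ?k2 + ?t1 + ?t2)")
proof -
  have tail: "ennreal (F (ramp R x - ramp R y) (x - y)) \<le> ennreal (c * 2 powr p) * tail_kernel a d (x - y)"
    if "d \<le> norm (x - y)" for d
    using F_ramp_le_norm_powr[OF F_upper c p xy, of R] c that
    by (simp add: tail_kernel_def ennreal_mult'[symmetric] ennreal_leI)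
  have via: "ennreal (F (ramp R x - ramp R y) (x - y)) \<le> ennreal (c * 2 powr p) * (?k1 + ?k2 + ?t1 + ?t2)"
    if "ennreal (F (ramp R x - ramp R y) (x - y)) \<le> ennreal (c * 2 powr p) * k" "k \<le> ?k1 + ?k2 + ?t1 + ?t2" for k
    using that by (meson mult_left_mono order_trans zero_le)
  consider "x \<in> S \<or> y \<in> S" | "x \<in> B" "y \<in> B" | "x \<in> B" "R + 2 \<le> norm y" | "R + 2 \<le> norm x" "y \<in> B"
    using D unfolding S_def B_def interaction_domain_def by fastforce
  then show ?thesis
  proof cases
    case 1
    then have "truncated_kernel a p (x - y) \<le> ?k1 + ?k2 + ?t1 + ?t2"
      by (auto intro: add_increasing add_increasing2)
    with F_ramp_le_truncated_kernel[OF F_upper c p xy] show ?thesis by (rule via)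
  next
    case 2
    then have "ramp R x - ramp R y = 0" by (simp add: B_def ramp_inner)
    with F_upper[of "x - y" 0] xy have "F (ramp R x - ramp R y) (x - y) \<le> 0" by simp
    then show ?thesis by (simp add: ennreal_neg)
  next
    case 3
    then have "R + 2 - norm x \<le> norm (x - y)"
      using norm_triangle_ineq3[of y x] by (simp add: norm_minus_commute)
    moreover have "?t1 \<le> ?k1 + ?k2 + ?t1 + ?t2" by (simp add: add_increasing add_increasing2)
    ultimately show ?thesis using 3 tail by (intro via) (auto simp: B_def)
  next
    case 4
    then have "R + 2 - norm y \<le> norm (x - y)"
      using norm_triangle_ineq3[of x y] by simp
    moreover have "?t2 \<le> ?k1 + ?k2 + ?t1 + ?t2" by (simp add: add_increasing)
    ultimately show ?thesis using 4 tail by (intro via) (auto simp: B_def)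
  qed
qed

lemma interaction_ramp_le:
  fixes F :: "real \<Rightarrow> 'a::euclidean_space \<Rightarrow> real" and R :: real
  assumes F_upper: "\<And>t x. x \<noteq> 0 \<Longrightarrow> F t x \<le> c * (\<bar>t\<bar> powr p / norm x powr a)"
    and c: "0 < c" and p: "0 \<le> p"
  defines "S \<equiv> ball (0::'a) (R+2) - ball 0 (R+1)" and "B \<equiv> ball (0::'a) (R+1)"
  shows "interaction F (ramp R) (interaction_domain (R+2)) \<le> ennreal (c * 2 powr p) *
     (2 * ((\<integral>\<^sup>+w. truncated_kernel a p (w::'a) \<partial>lborel) * emeasure lborel S)
      + 2 * (\<integral>\<^sup>+x. indicator B x * (\<integral>\<^sup>+w. tail_kernel a (R + 2 - norm x) (w::'a) \<partial>lborel) \<partial>lborel))"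
proof -
  define h1 where "h1 x w = indicator S x * truncated_kernel a p w" for x w :: 'a
  define h2 where "h2 x w = indicator B x * tail_kernel a (R + 2 - norm x) w" for x w :: 'a
  have [measurable]: "ball (0::'a) r \<in> sets borel" for r by simp
  have [measurable]: "(\<lambda>z::'a \<times> 'a. tail_kernel a (R + 2 - norm (fst z)) (snd z)) \<in> borel_measurable (borel \<Otimes>\<^sub>M borel)"
    unfolding tail_kernel_eq by measurable
  have h1_meas: "(\<lambda>z. h1 (fst z) (snd z)) \<in> borel_measurable borel"
    unfolding h1_def S_def borel_prod[symmetric] by measurable
  have h2_meas: "(\<lambda>z. h2 (fst z) (snd z)) \<in> borel_measurable borel"
    unfolding h2_def B_def borel_prod[symmetric] by measurable
  let ?M = "lebesgue \<Otimes>\<^sub>M lebesgue :: ('a \<times> 'a) measure"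
  let ?g = "\<lambda>z. h1 (fst z) (fst z - snd z) + h1 (snd z) (fst z - snd z)
    + h2 (fst z) (fst z - snd z) + h2 (snd z) (fst z - snd z)"
  have "interaction F (ramp R) (interaction_domain (R+2)) \<le> (\<integral>\<^sup>+z. ennreal (c * 2 powr p) * ?g z \<partial>?M)"
    unfolding interaction_def
  proof (rule nn_integral_mono_AE)
    show "AE z in ?M. indicator (interaction_domain (R+2)) z * ennreal (F (ramp R (fst z) - ramp R (snd z)) (fst z - snd z))
        \<le> ennreal (c * 2 powr p) * ?g z"
      using AE_pair_lebesgue_fst_neq_snd
    proof eventually_elim
      case (elim z)
      show ?case
        using interaction_ramp_pointwise_le[OF F_upper c p elim, of R]
        by (cases "z \<in> interaction_domain (R+2)") (auto simp: h1_def h2_def S_def B_def)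
    qed
  qed
  also have "\<dots> = ennreal (c * 2 powr p) *
      (2 * (\<integral>\<^sup>+x. \<integral>\<^sup>+w. h1 x w \<partial>lborel \<partial>lborel) + 2 * (\<integral>\<^sup>+x. \<integral>\<^sup>+w. h2 x w \<partial>lborel \<partial>lborel))"
    using borel_measurable_diff_coordinates[OF h1_meas] borel_measurable_diff_coordinates[OF h2_meas]
    by (simp add: nn_integral_cmult nn_integral_add nn_integral_pair_diff_fst[OF h1_meas]
        nn_integral_pair_diff_snd[OF h1_meas] nn_integral_pair_diff_fst[OF h2_meas]
        nn_integral_pair_diff_snd[OF h2_meas] mult_2 add_ac)
  also have "(\<integral>\<^sup>+x. \<integral>\<^sup>+w. h1 x w \<partial>lborel \<partial>lborel) = (\<integral>\<^sup>+w. truncated_kernel a p (w::'a) \<partial>lborel) * emeasure lborel S"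
    unfolding h1_def S_def
    by (simp add: nn_integral_cmult nn_integral_multc mult.commute)
  also have "(\<integral>\<^sup>+x. \<integral>\<^sup>+w. h2 x w \<partial>lborel \<partial>lborel)
      = (\<integral>\<^sup>+x. indicator B x * (\<integral>\<^sup>+w. tail_kernel a (R + 2 - norm x) (w::'a) \<partial>lborel) \<partial>lborel)"
    unfolding h2_def tail_kernel_eq by (simp add: nn_integral_cmult)
  finally show ?thesis .
qed

lemma potential_ramp_le:
  fixes W :: "real \<Rightarrow> real" and R :: real
  assumes W_bdd: "\<And>t. -1 \<le> t \<Longrightarrow> t \<le> 1 \<Longrightarrow> W t \<le> M" and W1: "W (-1) = 0" and R: "0 \<le> R"
  shows "potential W (ramp R) (ball (0::'a::euclidean_space) (R+2))
    \<le> ennreal (M * (measure lborel (ball (0::'a) 1) * DIM('a) * (R+2) ^ (DIM('a) - 1)))"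
proof -
  have "potential W (ramp R) (ball (0::'a) (R+2)) \<le> (\<integral>\<^sup>+x. ennreal M * indicator (ball (0::'a) (R+2) - ball 0 (R+1)) x \<partial>lebesgue)"
    unfolding potential_def
  proof (rule nn_integral_mono)
    fix x :: 'a
    show "indicator (ball 0 (R+2)) x * ennreal (W (ramp R x)) \<le> ennreal M * indicator (ball 0 (R+2) - ball 0 (R+1)) x"
      using W1 W_bdd[OF ramp_bounds] by (cases "norm x < R + 1") (auto simp: ramp_inner indicator_def intro: ennreal_leI)
  qed
  also have "\<dots> = ennreal M * emeasure lborel (ball (0::'a) (R+2) - ball 0 (R+1))"
    by (subst nn_integral_cmult_indicator) auto
  also have "\<dots> \<le> ennreal M * ennreal (measure lborel (ball (0::'a) 1) * DIM('a) * (R+2) ^ (DIM('a) - 1))"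
    using R by (intro mult_left_mono emeasure_lborel_annulus_le) auto
  finally show ?thesis
    using W_bdd[of "-1"] W1 by (simp add: ennreal_mult')
qed

lemma nn_integral_ball_tail_kernel_le:
  fixes a \<sigma> Ct R :: real
  assumes Ct: "0 \<le> Ct" "\<And>d. 0 < d \<Longrightarrow> (\<integral>\<^sup>+z. tail_kernel a d (z::'a::euclidean_space) \<partial>lborel) \<le> ennreal (Ct * d powr (-\<sigma>))"
    and R: "0 \<le> R" and \<sigma>: "0 < \<sigma>"
  shows "(\<integral>\<^sup>+x. indicator (ball (0::'a) (R+1)) x * (\<integral>\<^sup>+w. tail_kernel a (R + 2 - norm x) (w::'a) \<partial>lborel) \<partial>lborel)
    \<le> ennreal (Ct * (measure lborel (ball (0::'a) 1) * DIM('a) * (R+1) ^ (DIM('a) - 1)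
        * (\<Sum>j=1..nat \<lceil>R+1\<rceil>. real j powr (-\<sigma>))))"
proof -
  have "(\<integral>\<^sup>+x. indicator (ball (0::'a) (R+1)) x * (\<integral>\<^sup>+w. tail_kernel a (R + 2 - norm x) (w::'a) \<partial>lborel) \<partial>lborel)
      \<le> (\<integral>\<^sup>+x. ennreal Ct * (indicator (ball (0::'a) (R+1)) x * ennreal ((R + 1 + 1 - norm x) powr (-\<sigma>))) \<partial>lborel)"
    using Ct by (intro nn_integral_mono) (auto simp: indicator_def ennreal_mult' add.assoc)
  also have "\<dots> = ennreal Ct * (\<integral>\<^sup>+x. indicator (ball (0::'a) (R+1)) x * ennreal ((R + 1 + 1 - norm x) powr (-\<sigma>)) \<partial>lborel)"
  proof (rule nn_integral_cmult)
    have [measurable]: "ball (0::'a) (R+1) \<in> sets borel" by simp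
    have [measurable]: "(\<lambda>x::'a. (R + 1 + 1 - norm x) powr (-\<sigma>)) \<in> borel_measurable borel"
      by (intro powr_real_measurable borel_measurable_continuous_onI continuous_intros)
    show "(\<lambda>x::'a. indicator (ball 0 (R+1)) x * ennreal ((R + 1 + 1 - norm x) powr (-\<sigma>))) \<in> borel_measurable lborel"
      by measurable
  qed
  also have "\<dots> \<le> ennreal Ct * ennreal (measure lborel (ball (0::'a) 1) * DIM('a) * (R+1) ^ (DIM('a) - 1)
        * (\<Sum>j=1..nat \<lceil>R+1\<rceil>. real j powr (-\<sigma>)))"
    using R \<sigma> by (intro mult_left_mono nn_integral_ball_dist_sphere_powr_le) auto
  finally show ?thesis using Ct by (simp add: ennreal_mult')
qed

lemma ramp_energy_le:
  fixes F :: "real \<Rightarrow> 'a::euclidean_space \<Rightarrow> real" and W :: "real \<Rightarrow> real" and c p \<sigma> M :: real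
  assumes F_upper: "\<And>t x. x \<noteq> 0 \<Longrightarrow> F t x \<le> c * (\<bar>t\<bar> powr p / norm x powr (DIM('a) + \<sigma>))"
    and c: "0 < c" and \<sigma>: "0 < \<sigma>" "\<sigma> < p"
    and W_bdd: "\<And>t. -1 \<le> t \<Longrightarrow> t \<le> 1 \<Longrightarrow> W t \<le> M" and W1: "W (-1) = 0"
  obtains C1 C2 where "0 \<le> C1" "0 \<le> C2"
    "\<And>R. 0 \<le> R \<Longrightarrow> interaction F (ramp R) (interaction_domain (R+2)) + potential W (ramp R) (ball (0::'a) (R+2))
       \<le> ennreal (C1 * (R+2)^(DIM('a)-1) + C2 * (R+1)^(DIM('a)-1) * (\<Sum>j=1..nat \<lceil>R+1\<rceil>. real j powr (-\<sigma>)))"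
proof -
  define a where "a = DIM('a) + \<sigma>"
  define \<omega> where "\<omega> = measure lborel (ball (0::'a) 1)"
  define N where "N = DIM('a)"
  have p: "0 \<le> p" using \<sigma> by simp
  have M: "0 \<le> M" using W_bdd[of "-1"] W1 by simp
  have "(\<integral>\<^sup>+z. truncated_kernel a p (z::'a) \<partial>lborel) < \<infinity>"
    using \<sigma> unfolding a_def by (intro nn_integral_truncated_kernel_finite) auto
  then obtain K where K: "(\<integral>\<^sup>+z. truncated_kernel a p (z::'a) \<partial>lborel) = ennreal K" "0 \<le> K"
    by (cases "\<integral>\<^sup>+z. truncated_kernel a p (z::'a) \<partial>lborel" rule: ennreal_cases) auto
  obtain Ct where Ct: "0 \<le> Ct" "\<And>d. 0 < d \<Longrightarrow> (\<integral>\<^sup>+z. tail_kernel a d (z::'a) \<partial>lborel) \<le> ennreal (Ct * d powr (-\<sigma>))"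
    using nn_integral_tail_kernel_le[of a, where 'a='a] \<sigma> unfolding a_def by auto
  define C1 where "C1 = 2 * c * 2 powr p * K * \<omega> * N + M * \<omega> * N"
  define C2 where "C2 = 2 * c * 2 powr p * Ct * \<omega> * N"
  have "0 \<le> C1" "0 \<le> C2" unfolding C1_def C2_def \<omega>_def using c K Ct M by simp_all
  moreover have "interaction F (ramp R) (interaction_domain (R+2)) + potential W (ramp R) (ball (0::'a) (R+2))
       \<le> ennreal (C1 * (R+2)^(DIM('a)-1) + C2 * (R+1)^(DIM('a)-1) * (\<Sum>j=1..nat \<lceil>R+1\<rceil>. real j powr (-\<sigma>)))"
    if R: "0 \<le> R" for R
  proof -
    define H where "H = (\<Sum>j=1..nat \<lceil>R+1\<rceil>. real j powr (-\<sigma>))"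
    define \<alpha> where "\<alpha> = \<omega> * N * (R+2)^(N-1)"
    define \<beta> where "\<beta> = \<omega> * N * (R+1)^(N-1) * H"
    have "0 \<le> H" unfolding H_def by (intro sum_nonneg) simp
    then have \<alpha>\<beta>: "0 \<le> \<alpha>" "0 \<le> \<beta>" unfolding \<alpha>_def \<beta>_def \<omega>_def using R by simp_all
    have shell: "emeasure lborel (ball (0::'a) (R+2) - ball 0 (R+1)) \<le> ennreal \<alpha>"
      unfolding \<alpha>_def \<omega>_def N_def using R by (intro emeasure_lborel_annulus_le) auto
    have tail: "(\<integral>\<^sup>+x. indicator (ball (0::'a) (R+1)) x * (\<integral>\<^sup>+w. tail_kernel a (R + 2 - norm x) (w::'a) \<partial>lborel) \<partial>lborel)
        \<le> ennreal (Ct * \<beta>)"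
      unfolding \<beta>_def H_def \<omega>_def N_def by (rule nn_integral_ball_tail_kernel_le[OF Ct R \<sigma>(1)])
    have "interaction F (ramp R) (interaction_domain (R+2)) \<le> ennreal (c * 2 powr p) *
       (2 * ((\<integral>\<^sup>+w. truncated_kernel a p (w::'a) \<partial>lborel) * emeasure lborel (ball (0::'a) (R+2) - ball 0 (R+1)))
        + 2 * (\<integral>\<^sup>+x. indicator (ball (0::'a) (R+1)) x * (\<integral>\<^sup>+w. tail_kernel a (R + 2 - norm x) (w::'a) \<partial>lborel) \<partial>lborel))"
      using F_upper c p unfolding a_def[symmetric] by (rule interaction_ramp_le)
    also have "\<dots> \<le> ennreal (c * 2 powr p) * (2 * (ennreal K * ennreal \<alpha>) + 2 * ennreal (Ct * \<beta>))"
      unfolding K(1) by (intro mult_left_mono add_mono tail shell) simp_all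
    also have "\<dots> = ennreal (c * 2 powr p * (2 * K * \<alpha> + 2 * Ct * \<beta>))"
      using c K Ct \<alpha>\<beta> by (simp add: ennreal_mult' ennreal_mult'' mult.assoc)
    finally have "interaction F (ramp R) (interaction_domain (R+2))
        \<le> ennreal (c * 2 powr p * (2 * K * \<alpha> + 2 * Ct * \<beta>))" .
    moreover have "potential W (ramp R) (ball (0::'a) (R+2)) \<le> ennreal (M * \<alpha>)"
      using potential_ramp_le[where W=W and M=M and R=R and 'a='a, OF W_bdd W1 R] unfolding \<alpha>_def \<omega>_def N_def by simp
    ultimately have "interaction F (ramp R) (interaction_domain (R+2)) + potential W (ramp R) (ball (0::'a) (R+2))
        \<le> ennreal (c * 2 powr p * (2 * K * \<alpha> + 2 * Ct * \<beta>)) + ennreal (M * \<alpha>)"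
      by (rule add_mono)
    also have "\<dots> = ennreal (c * 2 powr p * (2 * K * \<alpha> + 2 * Ct * \<beta>) + M * \<alpha>)"
      using c K Ct M \<alpha>\<beta> by (intro ennreal_plus[symmetric]) auto
    also have "c * 2 powr p * (2 * K * \<alpha> + 2 * Ct * \<beta>) + M * \<alpha> = C1 * (R+2)^(N-1) + C2 * (R+1)^(N-1) * H"
      unfolding C1_def C2_def \<alpha>_def \<beta>_def by (simp add: algebra_simps)
    finally show ?thesis unfolding H_def N_def .
  qed
  ultimately show thesis using that by blast
qed

section \<open>Growth rates\<close>

lemma powr_neg_le_difference_quotient:
  fixes x \<sigma> :: real assumes x: "0 < x" and \<sigma>: "0 \<le> \<sigma>" "\<sigma> \<noteq> 1"
  shows "(x+1) powr (-\<sigma>) \<le> ((x+1) powr (1-\<sigma>) - x powr (1-\<sigma>)) / (1-\<sigma>)"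
proof -
  have "((\<lambda>t. t powr (1-\<sigma>)) has_real_derivative (1-\<sigma>) * t powr (1-\<sigma>-1)) (at t)"
    if "x \<le> t" for t
    using that x by (intro has_real_derivative_powr) auto
  from MVT2[of x "x+1", OF _ this] obtain t where t: "x < t" "t < x+1"
    "(x+1) powr (1-\<sigma>) - x powr (1-\<sigma>) = (1-\<sigma>) * t powr (-\<sigma>)"
    by auto
  have "(x+1) powr (-\<sigma>) \<le> t powr (-\<sigma>)" using t x \<sigma> by (intro powr_mono2') auto
  with t(3) \<sigma>(2) show ?thesis by simp
qed

lemma sum_powr_neg_le:
  fixes \<sigma> :: real assumes \<sigma>: "0 \<le> \<sigma>" "\<sigma> \<noteq> 1" and J: "1 \<le> J"
  shows "(\<Sum>j=1..J. real j powr (-\<sigma>)) \<le> (real J powr (1-\<sigma>) - \<sigma>) / (1-\<sigma>)"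
  using J
proof (induction J rule: nat_induct_at_least)
  case (Suc n)
  have "(\<Sum>j=1..Suc n. real j powr (-\<sigma>)) = (\<Sum>j=1..n. real j powr (-\<sigma>)) + (real n + 1) powr (-\<sigma>)"
    by (simp add: add.commute)
  also have "\<dots> \<le> (real n powr (1-\<sigma>) - \<sigma>) / (1-\<sigma>) + ((real n + 1) powr (1-\<sigma>) - real n powr (1-\<sigma>)) / (1-\<sigma>)"
    using Suc powr_neg_le_difference_quotient[of "real n" \<sigma>] \<sigma> by (intro add_mono) auto
  also have "\<dots> = (real (Suc n) powr (1-\<sigma>) - \<sigma>) / (1-\<sigma>)"
    by (simp add: add_divide_distrib[symmetric] add.commute)
  finally show ?case .
qed (use \<sigma> in simp)

lemma sum_inverse_le_ln:
  assumes "1 \<le> J" shows "(\<Sum>j=1..J. real j powr (-1)) \<le> 1 + ln (real J)"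
  using assms
proof (induction J rule: nat_induct_at_least)
  case (Suc n)
  have "ln (real n / (real n + 1)) \<le> real n / (real n + 1) - 1"
    using Suc by (intro ln_le_minus_one) auto
  moreover have "ln (real n / (real n + 1)) = ln (real n) - ln (real n + 1)"
    using Suc by (intro ln_divide_pos) auto
  moreover have "real n / (real n + 1) - 1 = - 1 / (real n + 1)" by (simp add: field_simps)
  ultimately have "1 / (real n + 1) \<le> ln (real n + 1) - ln (real n)" by linarith
  moreover have "(\<Sum>j=1..Suc n. real j powr (-1)) = (\<Sum>j=1..n. real j powr (-1)) + 1 / (real n + 1)"
    by (simp add: add.commute powr_minus_divide)
  ultimately show ?case using Suc by (simp add: add.commute)
qed simp

lemma sum_powr_neg_le_of_gt_1:
  fixes \<sigma> :: real assumes "1 < \<sigma>"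
  shows "(\<Sum>j=1..J. real j powr (-\<sigma>)) \<le> \<sigma> / (\<sigma> - 1)"
proof (cases "1 \<le> J")
  case True
  have "(real J powr (1-\<sigma>) - \<sigma>) / (1-\<sigma>) = (\<sigma> - real J powr (1-\<sigma>)) / (\<sigma> - 1)"
    by (metis minus_diff_eq minus_divide_divide)
  also have "\<dots> \<le> \<sigma> / (\<sigma> - 1)" using assms by (intro divide_right_mono) auto
  finally show ?thesis using sum_powr_neg_le[of \<sigma> J] assms True by simp
qed (use assms in simp)

lemma sum_powr_neg_le_of_lt_1:
  fixes \<sigma> :: real assumes "0 \<le> \<sigma>" "\<sigma> < 1" "1 \<le> J"
  shows "(\<Sum>j=1..J. real j powr (-\<sigma>)) \<le> real J powr (1-\<sigma>) / (1 - \<sigma>)"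
proof -
  have "(real J powr (1-\<sigma>) - \<sigma>) / (1-\<sigma>) \<le> real J powr (1-\<sigma>) / (1 - \<sigma>)"
    using assms by (intro divide_right_mono) auto
  then show ?thesis using sum_powr_neg_le[of \<sigma> J] assms by simp
qed

lemma layer_profile_le:
  fixes R h L \<rho> C1 C2 :: real
  assumes R: "2 \<le> R" and C: "0 \<le> C1" "0 \<le> C2" and h: "0 \<le> h" "h \<le> L * \<rho>" and \<rho>: "1 \<le> \<rho>"
  shows "C1 * (R+2)^(N-1) + C2 * (R+1)^(N-1) * h \<le> 2^(N-1) * (C1 + C2 * L) * (R^(N-1) * \<rho>)"
proof -
  define A where "A = 2^(N-1) * R^(N-1)"
  have A: "0 \<le> A" using R by (simp add: A_def)
  have "(R+2)^(N-1) \<le> A" "(R+1)^(N-1) \<le> A"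
    using R power_mono[of "R+2" "2*R" "N-1"] power_mono[of "R+1" "2*R" "N-1"]
    by (simp_all add: A_def power_mult_distrib)
  then have "C1 * (R+2)^(N-1) \<le> C1 * A" "C2 * (R+1)^(N-1) * h \<le> C2 * A * h"
    using C h by (simp_all add: mult_left_mono mult_right_mono)
  moreover have "C1 * A \<le> C1 * A * \<rho>" "C2 * A * h \<le> C2 * A * (L * \<rho>)"
    using C A h \<rho> mult_left_mono[of 1 \<rho> "C1 * A"] by (simp_all add: mult_left_mono)
  ultimately have "C1 * (R+2)^(N-1) + C2 * (R+1)^(N-1) * h \<le> C1 * A * \<rho> + C2 * A * (L * \<rho>)"
    by linarith
  moreover have "C1 * A * \<rho> + C2 * A * (L * \<rho>) = (C1 + C2 * L) * (A * \<rho>)"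
    by (simp add: algebra_simps)
  ultimately show ?thesis unfolding A_def by (simp only: mult_ac)
qed

lemma tendsto_div_power_zero_of_le:
  fixes e :: "real \<Rightarrow> ennreal" and \<rho> :: "real \<Rightarrow> real"
  assumes N: "1 \<le> N" and K: "0 \<le> K"
    and bound: "\<And>R. T \<le> R \<Longrightarrow> e R \<le> ennreal (K * (R^(N-1) * \<rho> R))"
    and \<rho>: "\<And>R. T \<le> R \<Longrightarrow> 0 \<le> \<rho> R" and lim: "((\<lambda>R. \<rho> R / R) \<longlongrightarrow> 0) at_top"
  shows "((\<lambda>R. e R / ennreal (R^N)) \<longlongrightarrow> 0) at_top"
proof (rule tendsto_sandwich[of "\<lambda>_. 0" _ _ "\<lambda>R. ennreal (K * (\<rho> R / R))"])
  show "eventually (\<lambda>R. e R / ennreal (R^N) \<le> ennreal (K * (\<rho> R / R))) at_top"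
    using eventually_ge_at_top[of "max T 1"]
  proof eventually_elim
    case (elim R)
    then have "e R / ennreal (R^N) \<le> ennreal (K * (R^(N-1) * \<rho> R)) / ennreal (R^N)"
      using bound by (intro divide_right_mono_ennreal) auto
    also have "\<dots> = ennreal (K * (R^(N-1) * \<rho> R) / R^N)"
      using elim K \<rho>[of R] by (intro divide_ennreal) auto
    also have "R^N = R^(N-1) * R"
      using N by (metis Suc_diff_1 less_le_trans power_Suc2 zero_less_one)
    then have "K * (R^(N-1) * \<rho> R) / R^N = K * (\<rho> R / R)"
      using elim by simp
    finally show ?case .
  qed
  have "((\<lambda>R. K * (\<rho> R / R)) \<longlongrightarrow> K * 0) at_top" by (intro tendsto_mult tendsto_const lim)
  then show "((\<lambda>R. ennreal (K * (\<rho> R / R))) \<longlongrightarrow> 0) at_top"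
    using tendsto_ennrealI by fastforce
qed auto

lemma layer_bound_le_rate:
  fixes e :: "real \<Rightarrow> ennreal" and \<rho> :: "real \<Rightarrow> real" and \<sigma> C1 C2 L :: real
  assumes C: "0 \<le> C1" "0 \<le> C2" and L: "0 \<le> L"
    and bound: "\<And>R. R\<^sub>0 \<le> R \<Longrightarrow> e R \<le> ennreal (C1 * (R+2)^(N-1) + C2 * (R+1)^(N-1) * (\<Sum>j=1..nat \<lceil>R+1\<rceil>. real j powr (-\<sigma>)))"
    and rate: "\<And>R. 3 \<le> R \<Longrightarrow> (\<Sum>j=1..nat \<lceil>R+1\<rceil>. real j powr (-\<sigma>)) \<le> L * \<rho> R \<and> 1 \<le> \<rho> R"
  obtains K where "0 < K" "\<And>R. max R\<^sub>0 3 \<le> R \<Longrightarrow> e R \<le> ennreal (K * (R^(N-1) * \<rho> R))"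
proof
  let ?K = "2^(N-1) * (C1 + C2 * L) + 1"
  show "0 < ?K" using C L by (simp add: add_nonneg_pos)
  fix R assume R: "max R\<^sub>0 3 \<le> R"
  have "C1 * (R+2)^(N-1) + C2 * (R+1)^(N-1) * (\<Sum>j=1..nat \<lceil>R+1\<rceil>. real j powr (-\<sigma>))
      \<le> 2^(N-1) * (C1 + C2 * L) * (R^(N-1) * \<rho> R)"
    using R C rate[of R] by (intro layer_profile_le) (auto intro: sum_nonneg)
  also have "\<dots> \<le> ?K * (R^(N-1) * \<rho> R)"
    using R rate[of R] by (intro mult_right_mono) auto
  finally show "e R \<le> ennreal (?K * (R^(N-1) * \<rho> R))"
    using bound[of R] R by (auto intro: order_trans ennreal_leI)
qed

lemma ceiling_succ_bounds:
  fixes R :: real assumes "3 \<le> R"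
  shows "1 \<le> nat \<lceil>R+1\<rceil>" "real (nat \<lceil>R+1\<rceil>) \<le> 2 * R"
  using assms by linarith+

lemma powr_real_minus_1_eq_power: "0 < R \<Longrightarrow> 1 \<le> N \<Longrightarrow> R powr (real N - 1) = R^(N-1)"
  by (simp add: powr_realpow[symmetric] of_nat_diff)

lemma layer_sum_le_ln:
  fixes R :: real assumes R: "3 \<le> R"
  shows "(\<Sum>j=1..nat \<lceil>R+1\<rceil>. real j powr (-1)) \<le> 3 * ln R"
proof -
  have "1 \<le> ln R" using R exp_le ln_ge_iff[of R 1] by auto
  moreover have "(\<Sum>j=1..nat \<lceil>R+1\<rceil>. real j powr (-1)) \<le> 1 + ln (2 * R)"
    using sum_inverse_le_ln[OF ceiling_succ_bounds(1)[OF R]] ceiling_succ_bounds[OF R] R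
    by (auto intro: order_trans)
  moreover have "ln (2 * R) = ln 2 + ln R" using R by (simp add: ln_mult)
  moreover have "ln 2 \<le> ln R" using R by simp
  ultimately show ?thesis by linarith
qed

lemma layer_sum_le_powr:
  fixes R \<sigma> :: real assumes R: "3 \<le> R" and \<sigma>: "0 \<le> \<sigma>" "\<sigma> < 1"
  shows "(\<Sum>j=1..nat \<lceil>R+1\<rceil>. real j powr (-\<sigma>)) \<le> 2 powr (1-\<sigma>) / (1-\<sigma>) * R powr (1-\<sigma>)"
proof -
  have "(\<Sum>j=1..nat \<lceil>R+1\<rceil>. real j powr (-\<sigma>)) \<le> real (nat \<lceil>R+1\<rceil>) powr (1-\<sigma>) / (1-\<sigma>)"
    using sum_powr_neg_le_of_lt_1[OF \<sigma> ceiling_succ_bounds(1)[OF R]] .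
  also have "\<dots> \<le> (2 * R) powr (1-\<sigma>) / (1-\<sigma>)"
    using ceiling_succ_bounds[OF R] \<sigma> by (intro divide_right_mono powr_mono2) auto
  finally show ?thesis using R by (simp add: powr_mult)
qed

lemma energy_growth_of_layer_bound_gt_1:
  fixes e :: "real \<Rightarrow> ennreal" and \<sigma> C1 C2 R\<^sub>0 :: real and N :: nat
  assumes N: "1 \<le> N" and C: "0 \<le> C1" "0 \<le> C2"
    and bound: "\<And>R. R\<^sub>0 \<le> R \<Longrightarrow> e R \<le> ennreal (C1 * (R+2)^(N-1) + C2 * (R+1)^(N-1) * (\<Sum>j=1..nat \<lceil>R+1\<rceil>. real j powr (-\<sigma>)))" and \<sigma>: "1 < \<sigma>"
  shows "((\<lambda>R. e R / ennreal (R^N)) \<longlongrightarrow> 0) at_top"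
    and "\<exists>C>0. \<exists>R1. \<forall>R\<ge>R1. e R \<le> ennreal (C * R powr (real N - 1))"
proof -
  obtain K where K: "0 < K" "\<And>R. max R\<^sub>0 3 \<le> R \<Longrightarrow> e R \<le> ennreal (K * (R^(N-1) * 1))"
    using layer_bound_le_rate[OF C _ bound, where L="\<sigma> / (\<sigma> - 1)" and \<rho>="\<lambda>_. 1"] sum_powr_neg_le_of_gt_1[OF \<sigma>] \<sigma>
    by auto
  show "((\<lambda>R. e R / ennreal (R^N)) \<longlongrightarrow> 0) at_top"
    using K by (intro tendsto_div_power_zero_of_le[OF N, where K=K and T="max R\<^sub>0 3" and \<rho>="\<lambda>_. 1"])
      (auto simp: divide_inverse intro: tendsto_inverse_0_at_top filterlim_ident)
  have "e R \<le> ennreal (K * R powr (real N - 1))" if "max R\<^sub>0 3 \<le> R" for R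
    using K(2)[OF that] that N powr_real_minus_1_eq_power[of R N] by simp
  then show "\<exists>C>0. \<exists>R1. \<forall>R\<ge>R1. e R \<le> ennreal (C * R powr (real N - 1))"
    using K(1) by (intro exI[of _ K] conjI exI[of _ "max R\<^sub>0 3"] allI impI)
qed

lemma energy_growth_of_layer_bound_eq_1:
  fixes e :: "real \<Rightarrow> ennreal" and \<sigma> C1 C2 R\<^sub>0 :: real and N :: nat
  assumes N: "1 \<le> N" and C: "0 \<le> C1" "0 \<le> C2"
    and bound: "\<And>R. R\<^sub>0 \<le> R \<Longrightarrow> e R \<le> ennreal (C1 * (R+2)^(N-1) + C2 * (R+1)^(N-1) * (\<Sum>j=1..nat \<lceil>R+1\<rceil>. real j powr (-\<sigma>)))" and \<sigma>: "\<sigma> = 1"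
  shows "((\<lambda>R. e R / ennreal (R^N)) \<longlongrightarrow> 0) at_top"
    and "\<exists>C>0. \<exists>R1. \<forall>R\<ge>R1. e R \<le> ennreal (C * R powr (real N - 1) * ln R)"
proof -
  have "1 \<le> ln R" if "3 \<le> R" for R :: real using that exp_le ln_ge_iff[of R 1] by auto
  then obtain K where K: "0 < K" "\<And>R. max R\<^sub>0 3 \<le> R \<Longrightarrow> e R \<le> ennreal (K * (R^(N-1) * ln R))"
    using layer_bound_le_rate[OF C _ bound, where L=3 and \<rho>=ln] layer_sum_le_ln \<sigma> by auto
  show "((\<lambda>R. e R / ennreal (R^N)) \<longlongrightarrow> 0) at_top"
    using K by (intro tendsto_div_power_zero_of_le[OF N, where K=K and T="max R\<^sub>0 3" and \<rho>=ln] ln_x_over_x_tendsto_0) auto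
  have "e R \<le> ennreal (K * R powr (real N - 1) * ln R)" if "max R\<^sub>0 3 \<le> R" for R
    using K(2)[OF that] that N powr_real_minus_1_eq_power[of R N] by (simp add: mult.assoc)
  then show "\<exists>C>0. \<exists>R1. \<forall>R\<ge>R1. e R \<le> ennreal (C * R powr (real N - 1) * ln R)"
    using K(1) by (intro exI[of _ K] conjI exI[of _ "max R\<^sub>0 3"] allI impI)
qed

lemma energy_growth_of_layer_bound_lt_1:
  fixes e :: "real \<Rightarrow> ennreal" and \<sigma> C1 C2 R\<^sub>0 :: real and N :: nat
  assumes N: "1 \<le> N" and C: "0 \<le> C1" "0 \<le> C2"
    and bound: "\<And>R. R\<^sub>0 \<le> R \<Longrightarrow> e R \<le> ennreal (C1 * (R+2)^(N-1) + C2 * (R+1)^(N-1) * (\<Sum>j=1..nat \<lceil>R+1\<rceil>. real j powr (-\<sigma>)))" and \<sigma>: "0 < \<sigma>" "\<sigma> < 1"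
  shows "((\<lambda>R. e R / ennreal (R^N)) \<longlongrightarrow> 0) at_top"
    and "\<exists>C>0. \<exists>R1. \<forall>R\<ge>R1. e R \<le> ennreal (C * R powr (real N - \<sigma>))"
proof -
  obtain K where K: "0 < K" "\<And>R. max R\<^sub>0 3 \<le> R \<Longrightarrow> e R \<le> ennreal (K * (R^(N-1) * R powr (1-\<sigma>)))"
    using layer_bound_le_rate[OF C _ bound, where L="2 powr (1-\<sigma>) / (1-\<sigma>)" and \<rho>="\<lambda>R. R powr (1-\<sigma>)"]
      layer_sum_le_powr \<sigma> by (auto simp: ge_one_powr_ge_zero)
  have "((\<lambda>R. R powr (1-\<sigma>) / R) \<longlongrightarrow> 0) at_top"
  proof (rule tendsto_cong[THEN iffD1, OF _ tendsto_neg_powr[OF _ filterlim_ident]])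
    show "\<forall>\<^sub>F R in at_top. R powr (-\<sigma>) = R powr (1-\<sigma>) / R"
      using eventually_gt_at_top[of 0] by eventually_elim (simp add: powr_diff powr_minus_divide)
  qed (use \<sigma> in simp)
  then show "((\<lambda>R. e R / ennreal (R^N)) \<longlongrightarrow> 0) at_top"
    using K by (intro tendsto_div_power_zero_of_le[OF N, where K=K and T="max R\<^sub>0 3" and \<rho>="\<lambda>R. R powr (1-\<sigma>)"]) auto
  have "e R \<le> ennreal (K * R powr (real N - \<sigma>))" if "max R\<^sub>0 3 \<le> R" for R
  proof -
    have "R^(N-1) * R powr (1-\<sigma>) = R powr (real N - 1) * R powr (1-\<sigma>)"
      using that N powr_real_minus_1_eq_power[of R N] by simp
    also have "\<dots> = R powr (real N - \<sigma>)" by (simp add: powr_add[symmetric])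
    finally show ?thesis using K(2)[OF that] by simp
  qed
  then show "\<exists>C>0. \<exists>R1. \<forall>R\<ge>R1. e R \<le> ennreal (C * R powr (real N - \<sigma>))"
    using K(1) by (intro exI[of _ K] conjI exI[of _ "max R\<^sub>0 3"] allI impI)
qed

lemma C2_on_imp_bounded_above:
  assumes "C2_on {a..b} W"
  obtains M where "\<And>t. a \<le> t \<Longrightarrow> t \<le> b \<Longrightarrow> W t \<le> M"
proof -
  obtain W1 where "\<forall>t\<in>{a..b}. (W has_real_derivative W1 t) (at t within {a..b})"
    using assms unfolding C2_on_def by blast
  then have "continuous_on {a..b} W" by (intro DERIV_continuous_on) auto
  then have "bounded (W ` {a..b})" by (intro compact_imp_bounded compact_continuous_image) auto
  then obtain B where "\<forall>t\<in>{a..b}. \<bar>W t\<bar> \<le> B" by (auto simp: bounded_iff)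
  then show ?thesis by (intro that[of B]) (auto simp: abs_le_iff)
qed

theorem theorem9:
  fixes F :: "real \<Rightarrow> real^'n \<Rightarrow> real" and W :: "real \<Rightarrow> real"
    and u :: "real^'n \<Rightarrow> real" and s p c_lo c_hi :: real
  assumes s: "0 < s" "s < 1" and p: "1 \<le> p"
    and F_meas: "(\<lambda>z. F (fst z) (snd z)) \<in> borel_measurable borel"
    and F_nonneg: "\<And>t x. x \<noteq> 0 \<Longrightarrow> 0 \<le> F t x"
    and F_sym1: "\<And>t x. x \<noteq> 0 \<Longrightarrow> F t x = F (-t) x"
    and F_sym2: "\<And>t x. x \<noteq> 0 \<Longrightarrow> F (-t) x = F (-t) (-x)"
    and F_mono: "\<And>t1 t2 x. x \<noteq> 0 \<Longrightarrow> \<bar>t1\<bar> \<le> \<bar>t2\<bar> \<Longrightarrow> F t1 x \<le> F t2 x"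
    and c_pos: "0 < c_lo" "0 < c_hi"
    and F_lower: "\<And>t x. x \<noteq> 0 \<Longrightarrow>
        c_lo * (\<bar>t\<bar> powr p / norm x powr (CARD('n) + s * p)
                - 1 / norm x powr (CARD('n) + s * p - p)) \<le> F t x"
    and F_upper: "\<And>t x. x \<noteq> 0 \<Longrightarrow>
        F t x \<le> c_hi * (\<bar>t\<bar> powr p / norm x powr (CARD('n) + s * p))"
    and W_meas: "W \<in> borel_measurable borel"
    and W_nonneg: "\<And>t. 0 \<le> W t"
    and W_C2: "C2_on {-1..1} W"
    and W_wells: "W 1 = 0" "W (-1) = 0"
    and u_bdd: "\<And>x. \<bar>u x\<bar> \<le> 1"
    and u_min: "\<exists>R0. \<forall>R \<ge> R0. is_minimizer F W u (R + 2)"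
  shows "((\<lambda>R. energy F W u R / ennreal (R ^ CARD('n))) \<longlongrightarrow> 0) at_top \<and>
     (s \<in> {1/p<..<1} \<longrightarrow> (\<exists>C>0. \<exists>R1. \<forall>R \<ge> R1.
           energy F W u R \<le> ennreal (C * R powr (real CARD('n) - 1)))) \<and>
     (s = 1/p \<longrightarrow> (\<exists>C>0. \<exists>R1. \<forall>R \<ge> R1.
           energy F W u R \<le> ennreal (C * R powr (real CARD('n) - 1) * ln R))) \<and>
     (s \<in> {0<..<1/p} \<longrightarrow> (\<exists>C>0. \<exists>R1. \<forall>R \<ge> R1.
           energy F W u R \<le> ennreal (C * R powr (real CARD('n) - s * p))))"
proof -
  \<comment> \<open>The upper estimate uses only the upper bound and monotonicity of \<open>F\<close>, boundedness of
    \<open>W\<close> on \<open>[-1, 1]\<close> and \<open>W (-1) = 0\<close>.\<close>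
  define \<sigma> where "\<sigma> = s * p"
  have \<sigma>: "0 < \<sigma>" "\<sigma> < p" unfolding \<sigma>_def using s p by auto
  obtain M where W_bdd: "\<And>t. -1 \<le> t \<Longrightarrow> t \<le> 1 \<Longrightarrow> W t \<le> M"
    using C2_on_imp_bounded_above[OF W_C2] by blast
  have "\<And>t x. x \<noteq> 0 \<Longrightarrow> F t x \<le> c_hi * (\<bar>t\<bar> powr p / norm x powr (DIM(real^'n) + \<sigma>))"
    using F_upper by (simp add: \<sigma>_def)
  from ramp_energy_le[where F=F and W=W and M=M, OF this c_pos(2) \<sigma> W_bdd W_wells(2)]
  obtain C1 C2 where C: "0 \<le> C1" "0 \<le> C2" and ramp_bound: "\<And>R. 0 \<le> R \<Longrightarrow>
      interaction F (ramp R) (interaction_domain (R+2)) + potential W (ramp R) (ball (0::real^'n) (R+2))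
       \<le> ennreal (C1 * (R+2)^(DIM(real^'n)-1) + C2 * (R+1)^(DIM(real^'n)-1) * (\<Sum>j=1..nat \<lceil>R+1\<rceil>. real j powr (-\<sigma>)))"
    by blast
  obtain R0 where R0: "\<And>R. R0 \<le> R \<Longrightarrow> is_minimizer F W u (R + 2)" using u_min by blast
  have "energy F W u R
      \<le> ennreal (C1 * (R+2)^(DIM(real^'n)-1) + C2 * (R+1)^(DIM(real^'n)-1) * (\<Sum>j=1..nat \<lceil>R+1\<rceil>. real j powr (-\<sigma>)))"
    if "max R0 0 \<le> R" for R
    using minimizer_energy_le_ramp[OF F_meas F_mono W_meas W_wells(2) u_bdd R0] ramp_bound that
    by (meson max.boundedE order_trans)
  note growth = energy_growth_of_layer_bound_gt_1[where R\<^sub>0="max R0 0", OF _ C this]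
    energy_growth_of_layer_bound_eq_1[where R\<^sub>0="max R0 0", OF _ C this]
    energy_growth_of_layer_bound_lt_1[where R\<^sub>0="max R0 0", OF _ C this]
  have "s \<in> {1/p<..<1} \<longleftrightarrow> 1 < \<sigma>" "s = 1/p \<longleftrightarrow> \<sigma> = 1" "s \<in> {0<..<1/p} \<longleftrightarrow> \<sigma> < 1"
    unfolding \<sigma>_def using s p by (auto simp: field_simps)
  with growth \<sigma>(1) show ?thesis unfolding \<sigma>_def by (auto simp: Suc_leI)
qed

end
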